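(* Let $K$ be a field complete with respect to a discrete valuation with perfect residue field of characteristic $p>0$, and let $L/K$ be a totally ramified Galois extension of degree $p$ with (lower) ramification break $b_1$. If $K$ has characteristic $p$, then $L/K$ has a Galois scaffold of tolerance $\mathfrak{T}=\infty$. If $K$ has characteristic $0$ and $b_1\ne pv_K(p)/(p-1)$, then $L/K$ has a Galois scaffold of tolerance $\mathfrak{T}=pv_K(p)-(p-1)b_1\ge1$.
   Context: $v_K,v_L$ are the normalized valuations of $K,L$; $\mathfrak{O}_K,\mathfrak{O}_L$ valuation rings, $\mathfrak{P}_L$ maximal ideal of $\mathfrak{O}_L$. For a totally ramified Galois extension $L/K$ of degree $p^n$ with group $G$, the ramification groups are $G_j=\{\sigma\in G:(\sigma-1)\mathfrak{O}_L\subseteq\mathfrak{P}_L^{j+1}\}$ and the lower ramification breaks counted with multiplicity are $b_i=\max\{j:|G_j|>p^{n-i}\}$, $1\le i\le n$. Let $\mathbb{S}_{p^n}=\{0,\dots,p^n-1\}$ with base-$p$ digits $s=\sum_{i=1}^n s_{(n-i)}p^{n-i}$. For integers $b_1,\dots,b_n$ prime to $p$, $\mathfrak{b}(s)=\sum_i s_{(n-i)}p^{n-i}b_i$, and $\mathfrak{a}(t)\in\mathbb{S}_{p^n}$ (for $t\in\mathbb{Z}$) is the unique element with $\mathfrak{b}(\mathfrak{a}(t))\equiv-t\pmod{p^n}$. A $K[G]$-scaffold on $L$ of tolerance $\mathfrak{T}\ge1$ (possibly $\infty$) with shift parameters $b_1,\dots,b_n$ consists of: (i) $\lambda_t\in L$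 ($t\in\mathbb{Z}$) with $v_L(\lambda_t)=t$ and $\lambda_{t_1}\lambda_{t_2}^{-1}\in K$ whenever $t_1\equiv t_2\pmod{p^n}$; (ii) $\Psi_1,\dots,\Psi_n\in K[G]$ with $\Psi_i\cdot1=0$ such that for each $i,t$ there is $u_{i,t}\in\mathfrak{O}_K^\times$ with $\Psi_i\cdot\lambda_t\equiv u_{i,t}\lambda_{t+p^{n-i}b_i}$ if $\mathfrak{a}(t)_{(n-i)}\ge1$ and $\equiv0$ if $\mathfrak{a}(t)_{(n-i)}=0$, modulo $\lambda_{t+p^{n-i}b_i}\mathfrak{P}_L^{\mathfrak{T}}$ (equalities if $\mathfrak{T}=\infty$). A Galois scaffold is a $K[G]$-scaffold (with $K[G]$ acting on $L$ in the usual way, residue field perfect) whose shift parameters are the lower ramification breaks $b_1,\dots,b_n$ of $L/K$. *)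

theory Defs
  imports Main "HOL-Library.Extended_Nat" "HOL-Computational_Algebra.Primes"
begin

text \<open>The top field L is the whole type 'a; the base field K is a subset.
  vL is the normalized valuation of L (its value at 0 is irrelevant, 0 is treated as having
  valuation infinity everywhere below); vK is the normalized valuation of K.\<close>

definition subfield :: "'a::field set \<Rightarrow> bool" where
  "subfield K \<longleftrightarrow> 0 \<in> K \<and> 1 \<in> K \<and> (\<forall>x\<in>K. \<forall>y\<in>K. x + y \<in> K \<and> x - y \<in> K \<and> x * y \<in> K)
     \<and> (\<forall>x\<in>K. x \<noteq> 0 \<longrightarrow> inverse x \<in> K)"

definition normalized_dval :: "('a::field \<Rightarrow> int) \<Rightarrow> bool" where
  "normalized_dval v \<longleftrightarrow>
     (\<forall>x y. x \<noteq> 0 \<longrightarrow> y \<noteq> 0 \<longrightarrow> v (x * y) = v x + v y) \<and>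
     (\<forall>x y. x \<noteq> 0 \<longrightarrow> y \<noteq> 0 \<longrightarrow> x + y \<noteq> 0 \<longrightarrow> v (x + y) \<ge> min (v x) (v y)) \<and>
     (\<forall>m. \<exists>x. x \<noteq> 0 \<and> v x = m)"

definition normalized_dval_on :: "'a::field set \<Rightarrow> ('a \<Rightarrow> int) \<Rightarrow> bool" where
  "normalized_dval_on K v \<longleftrightarrow>
     (\<forall>x\<in>K. \<forall>y\<in>K. x \<noteq> 0 \<longrightarrow> y \<noteq> 0 \<longrightarrow> v (x * y) = v x + v y) \<and>
     (\<forall>x\<in>K. \<forall>y\<in>K. x \<noteq> 0 \<longrightarrow> y \<noteq> 0 \<longrightarrow> x + y \<noteq> 0 \<longrightarrow> v (x + y) \<ge> min (v x) (v y)) \<and>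
     (\<forall>m. \<exists>x\<in>K. x \<noteq> 0 \<and> v x = m)"

definition val_ring :: "'a::field set \<Rightarrow> ('a \<Rightarrow> int) \<Rightarrow> 'a set" where
  "val_ring K v = {x\<in>K. x = 0 \<or> v x \<ge> 0}"

definition max_ideal :: "'a::field set \<Rightarrow> ('a \<Rightarrow> int) \<Rightarrow> 'a set" where
  "max_ideal K v = {x\<in>K. x = 0 \<or> v x > 0}"

definition complete_wrt :: "'a::field set \<Rightarrow> ('a \<Rightarrow> int) \<Rightarrow> bool" where
  "complete_wrt K v \<longleftrightarrow>
     (\<forall>s::nat \<Rightarrow> 'a. (\<forall>n. s n \<in> K) \<longrightarrow>
        (\<forall>M. \<exists>N. \<forall>m\<ge>N. \<forall>n\<ge>N. s m = s n \<or> v (s m - s n) \<ge> M) \<longrightarrow>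
        (\<exists>x\<in>K. \<forall>M. \<exists>N. \<forall>n\<ge>N. s n = x \<or> v (s n - x) \<ge> M))"

definition residue_char :: "'a::field set \<Rightarrow> ('a \<Rightarrow> int) \<Rightarrow> nat \<Rightarrow> bool" where
  "residue_char K v p \<longleftrightarrow> of_nat p \<in> max_ideal K v"

definition residue_perfect :: "'a::field set \<Rightarrow> ('a \<Rightarrow> int) \<Rightarrow> nat \<Rightarrow> bool" where
  "residue_perfect K v p \<longleftrightarrow>
     (\<forall>a\<in>val_ring K v. \<exists>b\<in>val_ring K v. a - b ^ p \<in> max_ideal K v)"

definition field_degree :: "'a::field set \<Rightarrow> nat \<Rightarrow> bool" where
  "field_degree K n \<longleftrightarrow> (\<exists>B. finite B \<and> card B = n \<and>
     (\<forall>x. \<exists>c. (\<forall>b\<in>B. c b \<in> K) \<and> x = (\<Sum>b\<in>B. c b * b)) \<and>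
     (\<forall>c. (\<forall>b\<in>B. c b \<in> K) \<longrightarrow> (\<Sum>b\<in>B. c b * b) = 0 \<longrightarrow> (\<forall>b\<in>B. c b = 0)))"

definition gal :: "'a::field set \<Rightarrow> ('a \<Rightarrow> 'a) set" where
  "gal K = {\<sigma>. bij \<sigma> \<and> (\<forall>x y. \<sigma> (x + y) = \<sigma> x + \<sigma> y) \<and> (\<forall>x y. \<sigma> (x * y) = \<sigma> x * \<sigma> y)
              \<and> \<sigma> 1 = 1 \<and> (\<forall>k\<in>K. \<sigma> k = k)}"

definition galois_of_degree :: "'a::field set \<Rightarrow> nat \<Rightarrow> bool" where
  "galois_of_degree K n \<longleftrightarrow> field_degree K n \<and> card (gal K) = n"

text \<open>Totally ramified of degree n: v_L restricted to K is n * v_K (ramification index e = n = [L:K]).\<close>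
definition totally_ramified :: "'a::field set \<Rightarrow> ('a \<Rightarrow> int) \<Rightarrow> ('a \<Rightarrow> int) \<Rightarrow> nat \<Rightarrow> bool" where
  "totally_ramified K vK vL n \<longleftrightarrow> field_degree K n \<and> (\<forall>x\<in>K. x \<noteq> 0 \<longrightarrow> vL x = int n * vK x)"

definition ram_group :: "'a::field set \<Rightarrow> ('a \<Rightarrow> int) \<Rightarrow> int \<Rightarrow> ('a \<Rightarrow> 'a) set" where
  "ram_group K vL j = {\<sigma>\<in>gal K. \<forall>x. (x = 0 \<or> vL x \<ge> 0) \<longrightarrow> (\<sigma> x - x = 0 \<or> vL (\<sigma> x - x) \<ge> j + 1)}"

definition lower_break :: "'a::field set \<Rightarrow> ('a \<Rightarrow> int) \<Rightarrow> nat \<Rightarrow> nat \<Rightarrow> nat \<Rightarrow> int" where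
  "lower_break K vL p n i = (GREATEST j::int. card (ram_group K vL j) > p ^ (n - i))"

definition digit :: "nat \<Rightarrow> nat \<Rightarrow> nat \<Rightarrow> nat" where
  "digit p k s = (s div p ^ k) mod p"

definition frak_b :: "nat \<Rightarrow> nat \<Rightarrow> (nat \<Rightarrow> int) \<Rightarrow> nat \<Rightarrow> int" where
  "frak_b p n b s = (\<Sum>i=1..n. int (digit p (n - i) s) * int p ^ (n - i) * b i)"

definition frak_a :: "nat \<Rightarrow> nat \<Rightarrow> (nat \<Rightarrow> int) \<Rightarrow> int \<Rightarrow> nat" where
  "frak_a p n b t = (THE s. s < p ^ n \<and> frak_b p n b s mod (int p ^ n) = (- t) mod (int p ^ n))"

text \<open>Action of an element \<Psi> = \<Sum> \<Psi>(\<sigma>) \<sigma> of K[G] on L.\<close>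
definition grp_act :: "('a \<Rightarrow> 'a) set \<Rightarrow> (('a \<Rightarrow> 'a) \<Rightarrow> 'a) \<Rightarrow> 'a \<Rightarrow> 'a::field" where
  "grp_act G \<Psi> x = (\<Sum>\<sigma>\<in>G. \<Psi> \<sigma> * \<sigma> x)"

text \<open>x \<equiv> y mod (element of valuation s)\<cdot>P_L^T; for T = \<infinity> this is equality.\<close>
definition cong_tol :: "('a::field \<Rightarrow> int) \<Rightarrow> enat \<Rightarrow> int \<Rightarrow> 'a \<Rightarrow> 'a \<Rightarrow> bool" where
  "cong_tol vL T s x y \<longleftrightarrow> x = y \<or> (\<exists>T'. T = enat T' \<and> vL (x - y) \<ge> s + int T')"

definition scaffold :: "'a::field set \<Rightarrow> ('a \<Rightarrow> int) \<Rightarrow> nat \<Rightarrow> nat \<Rightarrow> (nat \<Rightarrow> int) \<Rightarrow> enat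
     \<Rightarrow> (int \<Rightarrow> 'a) \<Rightarrow> (nat \<Rightarrow> ('a \<Rightarrow> 'a) \<Rightarrow> 'a) \<Rightarrow> bool" where
  "scaffold K vL p n b T lam Psi \<longleftrightarrow>
     T \<ge> 1 \<and>
     (\<forall>i\<in>{1..n}. \<not> int p dvd b i) \<and>
     (\<forall>t. lam t \<noteq> 0 \<and> vL (lam t) = t) \<and>
     (\<forall>t1 t2. t1 mod (int p ^ n) = t2 mod (int p ^ n) \<longrightarrow> lam t1 * inverse (lam t2) \<in> K) \<and>
     (\<forall>i\<in>{1..n}. (\<forall>\<sigma>\<in>gal K. Psi i \<sigma> \<in> K) \<and> grp_act (gal K) (Psi i) 1 = 0 \<and>
        (\<forall>t. \<exists>u. u \<in> K \<and> u \<noteq> 0 \<and> vL u = 0 \<and>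
           (let s = t + int p ^ (n - i) * b i in
             (if digit p (n - i) (frak_a p n b t) \<ge> 1
              then cong_tol vL T s (grp_act (gal K) (Psi i) (lam t)) (u * lam s)
              else cong_tol vL T s (grp_act (gal K) (Psi i) (lam t)) 0))))"

definition galois_scaffold :: "'a::field set \<Rightarrow> ('a \<Rightarrow> int) \<Rightarrow> nat \<Rightarrow> nat \<Rightarrow> enat \<Rightarrow> bool" where
  "galois_scaffold K vL p n T \<longleftrightarrow>
     (\<exists>lam Psi. scaffold K vL p n (lower_break K vL p n) T lam Psi)"

end

theory Submission
  imports Defs "HOL-Algebra.Multiplicative_Group"
begin

text \<open>Let \<open>\<pi>\<close> be a uniformizer of \<open>L\<close>. As \<open>v\<^sub>L(K\<^sup>\<times>) = p\<int>\<close>, the powers \<open>1, \<pi>, ..., \<pi>\<^sup>p\<^sup>-\<^sup>1\<close>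
  have \<open>K\<close>-multiples of pairwise distinct valuations, so they form a \<open>K\<close>-basis of \<open>L\<close> in which
  the valuation of an element is that of its leading term. Hence every \<open>\<sigma> \<in> Gal(L/K)\<close>
  preserves \<open>v\<^sub>L\<close>, and \<open>\<sigma> \<in> G\<^sub>j\<close> iff \<open>j < v\<^sub>L(\<sigma>\<pi> - \<pi>)\<close>. Fix \<open>\<sigma>\<close> realizing the break \<open>b\<close> and
  put \<open>\<Delta> = \<sigma> - 1\<close>: it raises by exactly \<open>b\<close> the valuation of every element whose valuation
  is prime to \<open>p\<close>, and \<open>\<sigma>\<^sup>p = 1\<close> expresses \<open>\<Delta>\<^sup>p\<close> through lower powers of \<open>\<Delta>\<close> with
  coefficients divisible by \<open>p\<close>. The hypothesis on \<open>b\<close> forces \<open>p \<nmid> b\<close>, and then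
  \<open>X = \<Delta>\<^sup>p\<^sup>-\<^sup>2(\<pi>\<^sup>b) / \<Delta>\<^sup>p\<^sup>-\<^sup>1(\<pi>\<^sup>b)\<close> has valuation \<open>-b\<close> and satisfies \<open>\<sigma>X = X + 1\<close>, exactly in
  characteristic \<open>p\<close> and up to an error of valuation \<open>p v\<^sub>K(p) - (p-1)b\<close> in characteristic \<open>0\<close>.
  The scaffold is \<open>\<lambda>\<^sub>t = c\<^sub>t X(X-1)...(X-a+1)\<close> with \<open>a = \<aa>(t)\<close> and a suitable power \<open>c\<^sub>t\<close>
  of a uniformizer of \<open>K\<close>, together with \<open>\<Psi> = \<sigma> - 1\<close>, which acts on these falling
  products like a derivative.\<close>

lemma prod_ratio_telescope:
  fixes f :: "nat \<Rightarrow> 'a::field"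
  assumes "\<And>k. f k \<noteq> 0"
  shows "(\<Prod>k<n. f (Suc k) / f k) = f n / f 0"
  using assms by (induction n) (simp_all add: field_simps)

lemma quotient_shift_identity:
  fixes u w d :: "'a::field"
  assumes "w \<noteq> 0" "w + d \<noteq> 0"
  shows "(u + w) / (w + d) - u / w - 1 = - ((u + w) * d / (w * (w + d)))"
proof -
  have "(u + w) / (w + d) - u / w - 1 = ((u + w) * w - u * (w + d) - w * (w + d)) / (w * (w + d))"
    using assms by (simp add: diff_divide_distrib add_divide_distrib)
  also have "(u + w) * w - u * (w + d) - w * (w + d) = - ((u + w) * d)" by (simp add: algebra_simps)
  finally show ?thesis by simp
qed

lemma falling_prod_diff:
  fixes x :: "'a::comm_ring_1"
  shows "(\<Prod>j<Suc a. x + 1 - of_nat j) - (\<Prod>j<Suc a. x - of_nat j) = of_nat (Suc a) * (\<Prod>j<a. x - of_nat j)"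
proof -
  have "(\<Prod>j<Suc a. x + 1 - of_nat j) = (x + 1) * (\<Prod>j<a. x - of_nat j)"
    by (subst prod.lessThan_Suc_shift) (simp add: algebra_simps)
  then show ?thesis by (simp add: algebra_simps)
qed

section \<open>Discrete valuations\<close>

text \<open>\<open>val_ge v x m\<close> reads \<open>v x \<ge> m\<close> with the convention \<open>v 0 = \<infinity>\<close>.\<close>
definition val_ge :: "('a::field \<Rightarrow> int) \<Rightarrow> 'a \<Rightarrow> int \<Rightarrow> bool" where
  "val_ge v x m \<longleftrightarrow> x = 0 \<or> m \<le> v x"

locale discrete_valuation =
  fixes v :: "'a::field \<Rightarrow> int"
  assumes normalized: "normalized_dval v"
begin

lemma v_mult: "x \<noteq> 0 \<Longrightarrow> y \<noteq> 0 \<Longrightarrow> v (x * y) = v x + v y"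
  using normalized unfolding normalized_dval_def by blast

lemma v_add_ge_min: "x \<noteq> 0 \<Longrightarrow> y \<noteq> 0 \<Longrightarrow> x + y \<noteq> 0 \<Longrightarrow> v (x + y) \<ge> min (v x) (v y)"
  using normalized unfolding normalized_dval_def by blast

lemma v_surj: "\<exists>x. x \<noteq> 0 \<and> v x = m"
  using normalized unfolding normalized_dval_def by blast

lemma v_one [simp]: "v 1 = 0"
  using v_mult[of 1 1] by simp

lemma v_uminus [simp]: "v (- x) = v x"
proof (cases "x = 0")
  case False
  have "v (-1) = 0" using v_mult[of "-1" "-1"] by simp
  then show ?thesis using v_mult[of "-1" x] False by simp
qed simp

lemma v_inverse: "x \<noteq> 0 \<Longrightarrow> v (inverse x) = - v x"
  using v_mult[of x "inverse x"] by simp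

lemma v_divide: "x \<noteq> 0 \<Longrightarrow> y \<noteq> 0 \<Longrightarrow> v (x / y) = v x - v y"
  by (simp add: divide_inverse v_mult v_inverse)

lemma v_power: "x \<noteq> 0 \<Longrightarrow> v (x ^ n) = int n * v x"
  by (induction n) (auto simp: v_mult algebra_simps)

lemma v_power_int: "x \<noteq> 0 \<Longrightarrow> v (x powi k) = k * v x"
  by (cases "k \<ge> 0") (auto simp: power_int_def v_power v_inverse)

lemma v_prod:
  "finite S \<Longrightarrow> (\<And>i. i \<in> S \<Longrightarrow> f i \<noteq> 0) \<Longrightarrow> prod f S \<noteq> 0 \<and> v (prod f S) = (\<Sum>i\<in>S. v (f i))"
  by (induction S rule: finite_induct) (auto simp: v_mult)

lemma val_ge_zero [simp]: "val_ge v 0 m"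
  by (simp add: val_ge_def)

lemma val_ge_self: "val_ge v x (v x)"
  by (simp add: val_ge_def)

lemma val_ge_mono: "val_ge v x m \<Longrightarrow> m' \<le> m \<Longrightarrow> val_ge v x m'"
  by (auto simp: val_ge_def)

lemma val_ge_add: "val_ge v x m \<Longrightarrow> val_ge v y m \<Longrightarrow> val_ge v (x + y) m"
  unfolding val_ge_def using v_add_ge_min[of x y] by force

lemma val_ge_uminus [simp]: "val_ge v (- x) m = val_ge v x m"
  by (simp add: val_ge_def)

lemma val_ge_diff: "val_ge v x m \<Longrightarrow> val_ge v y m \<Longrightarrow> val_ge v (x - y) m"
  using val_ge_add[of x m "- y"] by simp

lemma val_ge_mult: "val_ge v x m \<Longrightarrow> val_ge v y n \<Longrightarrow> val_ge v (x * y) (m + n)"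
  unfolding val_ge_def by (cases "x = 0"; cases "y = 0") (auto simp: v_mult)

lemma val_ge_sum: "(\<And>i. i \<in> S \<Longrightarrow> val_ge v (f i) m) \<Longrightarrow> val_ge v (sum f S) m"
  by (induction S rule: infinite_finite_induct) (simp_all add: val_ge_add)

lemma val_ge_one: "val_ge v 1 0"
  by (simp add: val_ge_def)

lemma val_ge_of_nat: "val_ge v (of_nat n) 0"
  by (induction n) (simp_all add: val_ge_add[OF val_ge_one] add.commute)

lemma val_ge_power: "val_ge v x m \<Longrightarrow> val_ge v (x ^ n) (int n * m)"
proof (induction n)
  case (Suc n)
  then have "val_ge v (x * x ^ n) (m + int n * m)" using val_ge_mult by blast
  then show ?case by (simp add: algebra_simps)
qed (simp add: val_ge_one)

lemma val_ge_prod: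
  "finite S \<Longrightarrow> (\<And>i. i \<in> S \<Longrightarrow> val_ge v (f i) m) \<Longrightarrow> val_ge v (prod f S) (int (card S) * m)"
proof (induction S rule: finite_induct)
  case (insert a S)
  then have "val_ge v (f a * prod f S) (m + int (card S) * m)" using val_ge_mult by blast
  then show ?case using insert by (simp add: algebra_simps)
qed (simp add: val_ge_one)

lemma v_add_dominant:
  assumes "x \<noteq> 0" "val_ge v y (v x + 1)"
  shows "x + y \<noteq> 0 \<and> v (x + y) = v x"
proof (cases "y = 0")
  case False
  then have y: "v y > v x" using assms by (simp add: val_ge_def)
  have ne: "x + y \<noteq> 0"
    using y by (metis add_eq_0_iff less_irrefl v_uminus)
  have "v (x + y) \<ge> v x" using v_add_ge_min[OF assms(1) False ne] y by simp
  moreover have "v x \<ge> min (v (x + y)) (v (- y))"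
    using v_add_ge_min[OF ne, of "- y"] False assms(1) by simp
  ultimately show ?thesis using ne y by auto
qed (use assms in simp)

lemma v_add_distinct:
  assumes "x \<noteq> 0" "y \<noteq> 0" "v x \<noteq> v y"
  shows "x + y \<noteq> 0 \<and> v (x + y) = min (v x) (v y)"
  using v_add_dominant[of x y] v_add_dominant[of y x] assms
  by (cases "v x < v y") (auto simp: val_ge_def add.commute)

lemma v_sum_distinct:
  assumes "finite S" "S \<noteq> {}" "\<And>i. i \<in> S \<Longrightarrow> f i \<noteq> 0"
    "\<And>i j. i \<in> S \<Longrightarrow> j \<in> S \<Longrightarrow> i \<noteq> j \<Longrightarrow> v (f i) \<noteq> v (f j)"
  shows "sum f S \<noteq> 0 \<and> v (sum f S) = Min ((\<lambda>i. v (f i)) ` S)"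
  using assms
proof (induction S rule: finite_ne_induct)
  case (insert a S)
  have IH: "sum f S \<noteq> 0" "v (sum f S) = Min ((\<lambda>i. v (f i)) ` S)"
    using insert.IH insert.prems by auto
  have "Min ((\<lambda>i. v (f i)) ` S) \<in> (\<lambda>i. v (f i)) ` S"
    using insert.hyps(1,2) by (intro Min_in) auto
  then obtain j where j: "j \<in> S" "Min ((\<lambda>i. v (f i)) ` S) = v (f j)" by blast
  have "v (f a) \<noteq> v (sum f S)"
    using IH(2) j insert.prems(2)[of a j] insert.hyps(3) by auto
  then have "f a + sum f S \<noteq> 0 \<and> v (f a + sum f S) = min (v (f a)) (v (sum f S))"
    using v_add_distinct insert.prems(1) IH by blast
  then show ?case using insert.hyps IH(2) by simp
qed simp

lemma v_sum_dominant:
  assumes "finite S" "r \<in> S" "f r \<noteq> 0" "\<And>i. i \<in> S - {r} \<Longrightarrow> val_ge v (f i) (v (f r) + 1)"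
  shows "sum f S \<noteq> 0 \<and> v (sum f S) = v (f r)"
proof -
  have "sum f S = f r + sum f (S - {r})" using assms(1,2) by (simp add: sum.remove)
  moreover have "val_ge v (sum f (S - {r})) (v (f r) + 1)" using assms(4) by (intro val_ge_sum)
  ultimately show ?thesis using v_add_dominant[OF assms(3)] by simp
qed

lemma val_ge_prod_perturb:
  assumes "finite S" "S \<noteq> {}" "\<And>k. k \<in> S \<Longrightarrow> val_ge v (A k) m0"
    "\<And>k. k \<in> S \<Longrightarrow> val_ge v (e k) m1" "m0 \<le> m1"
  shows "val_ge v ((\<Prod>k\<in>S. A k + e k) - (\<Prod>k\<in>S. A k)) (m1 + (int (card S) - 1) * m0)"
  using assms
proof (induction S rule: finite_ne_induct)
  case (insert a S)
  define P' where "P' = (\<Prod>k\<in>S. A k + e k)"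
  define P where "P = (\<Prod>k\<in>S. A k)"
  have IH: "val_ge v (P' - P) (m1 + (int (card S) - 1) * m0)"
    using insert unfolding P'_def P_def by auto
  have split: "(\<Prod>k\<in>insert a S. A k + e k) - (\<Prod>k\<in>insert a S. A k) = (A a + e a) * (P' - P) + e a * P"
    using insert.hyps unfolding P'_def P_def by (simp add: algebra_simps)
  have "val_ge v (A a + e a) m0"
    using insert.prems val_ge_add[OF _ val_ge_mono[of _ m1 m0]] by auto
  then have "val_ge v ((A a + e a) * (P' - P)) (m0 + (m1 + (int (card S) - 1) * m0))"
    using IH by (rule val_ge_mult)
  moreover have "val_ge v P (int (card S) * m0)"
    unfolding P_def using val_ge_prod insert by auto
  then have "val_ge v (e a * P) (m1 + int (card S) * m0)"
    using val_ge_mult insert.prems by auto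
  ultimately have "val_ge v ((A a + e a) * (P' - P) + e a * P) (m1 + int (card S) * m0)"
    by (intro val_ge_add) (simp_all add: algebra_simps)
  then show ?case unfolding split using insert.hyps by simp
qed simp

lemma val_ge_binomial_remainder:
  assumes "val_ge v e b" "b \<ge> 0"
  shows "val_ge v ((1 + e) ^ i - 1 - of_nat i * e) (2 * b)"
proof (induction i)
  case (Suc i)
  define R where "R = (1 + e) ^ i - 1 - of_nat i * e"
  have split: "(1 + e) ^ Suc i - 1 - of_nat (Suc i) * e = (1 + e) * R + of_nat i * (e * e)"
    unfolding R_def by (simp add: algebra_simps)
  have "val_ge v (1 + e) 0" using val_ge_add[OF val_ge_one val_ge_mono[OF assms]] .
  then have "val_ge v ((1 + e) * R) (0 + 2 * b)" using val_ge_mult Suc.IH unfolding R_def by blast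
  moreover have "val_ge v (of_nat i * (e * e)) (0 + (b + b))"
    using val_ge_mult[OF val_ge_of_nat val_ge_mult[OF assms(1) assms(1)]] .
  ultimately show ?case unfolding split by (intro val_ge_add) simp_all
qed simp

lemma val_ge_power_diff:
  assumes "val_ge v q 1" "val_ge v z 1" "i \<ge> 1"
  shows "val_ge v (q ^ i - z ^ i) (v (q - z) + (int i - 1))"
proof -
  have "val_ge v (\<Sum>k<i. z ^ (i - Suc k) * q ^ k) (int i - 1)"
  proof (rule val_ge_sum)
    fix k assume k: "k \<in> {..<i}"
    have "val_ge v (z ^ (i - Suc k) * q ^ k) (int (i - Suc k) * 1 + int k * 1)"
      by (intro val_ge_mult val_ge_power assms)
    then show "val_ge v (z ^ (i - Suc k) * q ^ k) (int i - 1)" using k by (simp add: of_nat_diff)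
  qed
  then show ?thesis
    unfolding power_diff_sumr2 using val_ge_mult[OF val_ge_self] by blast
qed

lemma v_root_of_eisenstein:
  assumes "p > 0" "q \<noteq> 0" "q ^ p = (\<Sum>i<p. d i * q ^ i)"
    and "\<And>i. i < p \<Longrightarrow> val_ge v (d i) (int p)" "d 0 \<noteq> 0" "v (d 0) = int p"
  shows "v q = 1"
proof -
  define m where "m = v q"
  have vqp: "v (q ^ p) = int p * m" using assms(2) v_power m_def by simp
  have term_ge: "val_ge v (d i * q ^ i) (int p + int i * m)" if "i < p" for i
    using val_ge_mult[OF assms(4)[OF that] val_ge_power[OF val_ge_self]] unfolding m_def .
  have "\<not> m \<ge> 2"
  proof
    assume "m \<ge> 2"
    have "(\<Sum>i\<in>{..<p}. d i * q ^ i) \<noteq> 0 \<and> v (\<Sum>i\<in>{..<p}. d i * q ^ i) = v (d 0 * q ^ 0)"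
    proof (rule v_sum_dominant)
      fix i assume i: "i \<in> {..<p} - {0}"
      then have "int i * m \<ge> 1 * 1" using \<open>m \<ge> 2\<close> by (intro mult_mono) auto
      then show "val_ge v (d i * q ^ i) (v (d 0 * q ^ 0) + 1)"
        using term_ge[of i] i val_ge_mono assms(6) by simp
    qed (use assms in auto)
    then have "int p * m = int p" using assms(3,6) vqp by simp
    then show False using \<open>m \<ge> 2\<close> assms(1) by simp
  qed
  moreover have "\<not> m \<le> 0"
  proof
    assume "m \<le> 0"
    have "val_ge v (\<Sum>i<p. d i * q ^ i) (int p * m + 1)"
    proof (rule val_ge_sum)
      fix i assume i: "i \<in> {..<p}"
      have "(int p - int i) * (- m) \<ge> 0" using i \<open>m \<le> 0\<close> by (intro mult_nonneg_nonneg) auto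
      then have "int p + int i * m \<ge> int p * m + 1" using assms(1) by (simp add: algebra_simps)
      then show "val_ge v (d i * q ^ i) (int p * m + 1)" using term_ge[of i] i val_ge_mono by simp
    qed
    then show False using assms(2,3) vqp by (simp add: val_ge_def)
  qed
  ultimately show ?thesis unfolding m_def by simp
qed

end

section \<open>Subfields and linear dependence\<close>

context
  fixes K :: "'a::field set"
  assumes K: "subfield K"
begin

lemma subfield_zero: "0 \<in> K" and subfield_one: "1 \<in> K"
  using K unfolding subfield_def by auto

lemma subfield_add: "x \<in> K \<Longrightarrow> y \<in> K \<Longrightarrow> x + y \<in> K"
  and subfield_diff: "x \<in> K \<Longrightarrow> y \<in> K \<Longrightarrow> x - y \<in> K"
  and subfield_mult: "x \<in> K \<Longrightarrow> y \<in> K \<Longrightarrow> x * y \<in> K"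
  using K unfolding subfield_def by auto

lemma subfield_inverse: "x \<in> K \<Longrightarrow> inverse x \<in> K"
  using K unfolding subfield_def by (cases "x = 0") auto

lemma subfield_uminus: "x \<in> K \<Longrightarrow> - x \<in> K"
  using subfield_diff[OF subfield_zero] by simp

lemma subfield_divide: "x \<in> K \<Longrightarrow> y \<in> K \<Longrightarrow> x / y \<in> K"
  by (simp add: divide_inverse subfield_mult subfield_inverse)

lemma subfield_power: "x \<in> K \<Longrightarrow> x ^ n \<in> K"
  by (induction n) (simp_all add: subfield_one subfield_mult)

lemma subfield_power_int: "x \<in> K \<Longrightarrow> x powi k \<in> K"
  by (simp add: power_int_def subfield_power subfield_inverse)

lemma subfield_sum: "(\<And>i. i \<in> S \<Longrightarrow> f i \<in> K) \<Longrightarrow> sum f S \<in> K"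
  by (induction S rule: infinite_finite_induct) (simp_all add: subfield_zero subfield_add)

lemma subfield_of_nat: "of_nat n \<in> K"
  by (induction n) (simp_all add: subfield_zero subfield_one subfield_add)

end

definition K_span :: "'a::field set \<Rightarrow> 'a set \<Rightarrow> 'a set" where
  "K_span K B = {x. \<exists>c. (\<forall>b\<in>B. c b \<in> K) \<and> x = (\<Sum>b\<in>B. c b * b)}"

definition K_dependent :: "'a::field set \<Rightarrow> 'i set \<Rightarrow> ('i \<Rightarrow> 'a) \<Rightarrow> bool" where
  "K_dependent K I w \<longleftrightarrow> (\<exists>\<beta>. (\<forall>j\<in>I. \<beta> j \<in> K) \<and> (\<Sum>j\<in>I. \<beta> j * w j) = 0 \<and> (\<exists>j\<in>I. \<beta> j \<noteq> 0))"

context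
  fixes K :: "'a::field set"
  assumes K: "subfield K"
begin

lemma K_span_diff_smult:
  assumes "x \<in> K_span K B" "y \<in> K_span K B" "a \<in> K"
  shows "x - a * y \<in> K_span K B"
proof -
  obtain c d where c: "\<forall>b\<in>B. c b \<in> K" "x = (\<Sum>b\<in>B. c b * b)"
    and d: "\<forall>b\<in>B. d b \<in> K" "y = (\<Sum>b\<in>B. d b * b)"
    using assms(1,2) unfolding K_span_def by blast
  have "x - a * y = (\<Sum>b\<in>B. (c b - a * d b) * b)"
    using c d by (simp add: sum_distrib_left sum_subtractf algebra_simps)
  moreover have "\<forall>b\<in>B. c b - a * d b \<in> K"
    using c d assms(3) K subfield_diff subfield_mult by blast
  ultimately show ?thesis unfolding K_span_def by (intro CollectI exI[of _ "\<lambda>b. c b - a * d b"]) simp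
qed

lemma K_span_insert:
  assumes "finite B" "b \<notin> B" "x \<in> K_span K (insert b B)"
  shows "\<exists>a r. a \<in> K \<and> r \<in> K_span K B \<and> x = a * b + r"
proof -
  obtain c where c: "\<forall>y\<in>insert b B. c y \<in> K" "x = (\<Sum>y\<in>insert b B. c y * y)"
    using assms(3) unfolding K_span_def by blast
  then have "x = c b * b + (\<Sum>y\<in>B. c y * y)" using assms(1,2) by simp
  moreover have "(\<Sum>y\<in>B. c y * y) \<in> K_span K B" using c(1) unfolding K_span_def by blast
  ultimately show ?thesis using c(1) by blast
qed

lemma K_span_insert_coeffs:
  assumes "finite B" "b \<notin> B" "\<forall>j\<in>I. w j \<in> K_span K (insert b B)"
  obtains \<alpha> r where "\<And>j. j \<in> I \<Longrightarrow> \<alpha> j \<in> K \<and> r j \<in> K_span K B \<and> w j = \<alpha> j * b + r j"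
proof -
  have "\<forall>j\<in>I. \<exists>ar. fst ar \<in> K \<and> snd ar \<in> K_span K B \<and> w j = fst ar * b + snd ar"
  proof
    fix j assume "j \<in> I"
    then obtain a r where "a \<in> K" "r \<in> K_span K B" "w j = a * b + r"
      using K_span_insert assms by blast
    then show "\<exists>ar. fst ar \<in> K \<and> snd ar \<in> K_span K B \<and> w j = fst ar * b + snd ar"
      by (intro exI[of _ "(a, r)"]) simp
  qed
  then have "\<exists>ar. \<forall>j\<in>I. fst (ar j) \<in> K \<and> snd (ar j) \<in> K_span K B \<and> w j = fst (ar j) * b + snd (ar j)"
    by (rule bchoice)
  then obtain ar where "\<forall>j\<in>I. fst (ar j) \<in> K \<and> snd (ar j) \<in> K_span K B \<and> w j = fst (ar j) * b + snd (ar j)"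
    by blast
  then show ?thesis using that[of "fst \<circ> ar" "snd \<circ> ar"] by simp
qed

lemma K_dependent_eliminate:
  assumes "finite I" "k \<in> I" "\<alpha> k \<noteq> 0" "\<forall>j\<in>I. \<alpha> j \<in> K"
    and "K_dependent K (I - {k}) (\<lambda>j. w j - (\<alpha> j / \<alpha> k) * w k)"
  shows "K_dependent K I w"
proof -
  obtain \<beta> where \<beta>: "\<forall>j\<in>I - {k}. \<beta> j \<in> K" "\<exists>j\<in>I - {k}. \<beta> j \<noteq> 0"
    and rel: "(\<Sum>j\<in>I - {k}. \<beta> j * (w j - (\<alpha> j / \<alpha> k) * w k)) = 0"
    using assms(5) unfolding K_dependent_def by blast
  define s where "s = (\<Sum>j\<in>I - {k}. \<beta> j * (\<alpha> j / \<alpha> k))"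
  define \<gamma> where "\<gamma> j = (if j = k then - s else \<beta> j)" for j
  have "s \<in> K"
    unfolding s_def using \<beta>(1) assms(2,4)
    by (intro subfield_sum[OF K] subfield_mult[OF K] subfield_divide[OF K]) auto
  then have "\<forall>j\<in>I. \<gamma> j \<in> K" using \<beta>(1) K subfield_uminus unfolding \<gamma>_def by auto
  moreover have "(\<Sum>j\<in>I. \<gamma> j * w j) = 0"
  proof -
    have "(\<Sum>j\<in>I. \<gamma> j * w j) = \<gamma> k * w k + (\<Sum>j\<in>I - {k}. \<gamma> j * w j)"
      using assms(1,2) by (simp add: sum.remove)
    also have "(\<Sum>j\<in>I - {k}. \<gamma> j * w j) = (\<Sum>j\<in>I - {k}. \<beta> j * w j)"
      unfolding \<gamma>_def by (intro sum.cong) auto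
    also have "\<dots> = (\<Sum>j\<in>I - {k}. \<beta> j * (w j - (\<alpha> j / \<alpha> k) * w k) + \<beta> j * (\<alpha> j / \<alpha> k) * w k)"
      by (intro sum.cong) (simp_all add: algebra_simps)
    also have "\<dots> = (\<Sum>j\<in>I - {k}. \<beta> j * (w j - (\<alpha> j / \<alpha> k) * w k)) + s * w k"
      unfolding s_def by (simp add: sum.distrib sum_distrib_right)
    finally show ?thesis using rel unfolding \<gamma>_def by simp
  qed
  moreover have "\<exists>j\<in>I. \<gamma> j \<noteq> 0" using \<beta>(2) unfolding \<gamma>_def by auto
  ultimately show ?thesis unfolding K_dependent_def by blast
qed

lemma K_dependent_if_in_span:
  assumes "finite B" "finite I" "card I > card B" "\<forall>j\<in>I. w j \<in> K_span K B"
  shows "K_dependent K I w"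
  using assms
proof (induction B arbitrary: I w rule: finite_induct)
  case empty
  then obtain j0 where "j0 \<in> I" by fastforce
  moreover have "\<forall>j\<in>I. w j = 0" using empty.prems unfolding K_span_def by simp
  ultimately show ?case unfolding K_dependent_def using K subfield_zero subfield_one
    by (intro exI[of _ "\<lambda>j. if j = j0 then 1 else 0"]) auto
next
  case (insert b B)
  obtain \<alpha> r where \<alpha>r: "\<And>j. j \<in> I \<Longrightarrow> \<alpha> j \<in> K \<and> r j \<in> K_span K B \<and> w j = \<alpha> j * b + r j"
    using K_span_insert_coeffs[OF insert.hyps(1,2) insert.prems(3)] by blast
  show ?case
  proof (cases "\<forall>j\<in>I. \<alpha> j = 0")
    case True
    then have "\<forall>j\<in>I. w j \<in> K_span K B" using \<alpha>r by simp
    then show ?thesis using insert.IH insert.prems(1,2) insert.hyps by simp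
  next
    case False
    then obtain k where k: "k \<in> I" "\<alpha> k \<noteq> 0" by blast
    define w' where "w' j = w j - (\<alpha> j / \<alpha> k) * w k" for j
    have "\<forall>j\<in>I - {k}. w' j \<in> K_span K B"
    proof
      fix j assume j: "j \<in> I - {k}"
      have "w' j = r j - (\<alpha> j / \<alpha> k) * r k"
        using \<alpha>r[of j] \<alpha>r[OF k(1)] j k(2) unfolding w'_def by (simp add: field_simps)
      moreover have "r j - (\<alpha> j / \<alpha> k) * r k \<in> K_span K B"
        using \<alpha>r[of j] \<alpha>r[OF k(1)] j by (intro K_span_diff_smult subfield_divide[OF K]) auto
      ultimately show "w' j \<in> K_span K B" by simp
    qed
    moreover have "finite (I - {k})" "card (I - {k}) > card B"
      using insert.prems(1,2) insert.hyps k(1) by (simp_all add: card_Diff_singleton)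
    ultimately have "K_dependent K (I - {k}) w'" using insert.IH by blast
    moreover have "\<forall>j\<in>I. \<alpha> j \<in> K" using \<alpha>r by blast
    ultimately show ?thesis
      using K_dependent_eliminate[where \<alpha> = \<alpha>, OF insert.prems(1) k] unfolding w'_def by blast
  qed
qed

lemma independent_spans:
  assumes "field_degree K n"
    and indep: "\<And>c. (\<forall>i<n. c i \<in> K) \<Longrightarrow> (\<Sum>i<n. c i * e i) = 0 \<Longrightarrow> \<forall>i<n. c i = 0"
  shows "\<exists>c. (\<forall>i<n. c i \<in> K) \<and> y = (\<Sum>i<n. c i * e i)"
proof -
  obtain B where B: "finite B" "card B = n" "\<forall>x. \<exists>c. (\<forall>b\<in>B. c b \<in> K) \<and> x = (\<Sum>b\<in>B. c b * b)"
    using assms(1) unfolding field_degree_def by blast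
  define w where "w i = (if i = n then y else e i)" for i
  have "\<forall>j\<in>{..n}. w j \<in> K_span K B"
  proof
    fix j
    obtain c where "(\<forall>b\<in>B. c b \<in> K) \<and> w j = (\<Sum>b\<in>B. c b * b)" using B(3) by blast
    then show "w j \<in> K_span K B" unfolding K_span_def by (intro CollectI exI[of _ c]) simp
  qed
  then have "K_dependent K {..n} w"
    using K_dependent_if_in_span[OF B(1), of "{..n}" w] B(2) by simp
  then obtain \<beta> where \<beta>: "\<forall>j\<in>{..n}. \<beta> j \<in> K" "(\<Sum>j\<in>{..n}. \<beta> j * w j) = 0" "\<exists>j\<in>{..n}. \<beta> j \<noteq> 0"
    unfolding K_dependent_def by blast
  have rel: "\<beta> n * y + (\<Sum>i<n. \<beta> i * e i) = 0"
    using \<beta>(2) unfolding w_def by (simp add: lessThan_Suc_atMost[symmetric] add.commute)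
  have "\<beta> n \<noteq> 0"
  proof
    assume "\<beta> n = 0"
    then have "(\<Sum>i<n. \<beta> i * e i) = 0" using rel by simp
    then have "\<forall>i<n. \<beta> i = 0" using indep \<beta>(1) by simp
    then show False using \<beta>(3) \<open>\<beta> n = 0\<close> by (auto simp: le_less)
  qed
  have "\<beta> n * y = - (\<Sum>i<n. \<beta> i * e i)" using rel by (simp add: eq_neg_iff_add_eq_0)
  then have "y = - (\<Sum>i<n. \<beta> i * e i) / \<beta> n"
    using \<open>\<beta> n \<noteq> 0\<close> by (simp add: field_simps)
  also have "\<dots> = (\<Sum>i<n. (- \<beta> i / \<beta> n) * e i)"
    by (simp add: sum_divide_distrib sum_negf[symmetric])
  finally have "y = (\<Sum>i<n. (- \<beta> i / \<beta> n) * e i)" .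
  moreover have "\<forall>i<n. - \<beta> i / \<beta> n \<in> K"
    using \<beta>(1) by (auto intro!: subfield_divide[OF K] subfield_uminus[OF K])
  ultimately show ?thesis by (intro exI[of _ "\<lambda>i. - \<beta> i / \<beta> n"]) simp
qed

end

lemma unique_residue_solution:
  assumes "prime p" "\<not> int p dvd B"
  shows "\<exists>!s. s < p \<and> (int s * B) mod int p = c mod int p"
proof (rule ex_ex1I)
  have "coprime B (int p)" using assms prime_imp_coprime[of "int p" B] by (simp add: coprime_commute)
  then obtain u v where uv: "u * B + v * int p = 1" using bezout_int[of B "int p"] by auto
  define s where "s = nat ((c * u) mod int p)"
  have s: "int s = (c * u) mod int p" using assms(1) prime_gt_0_nat unfolding s_def by simp
  have "(int s * B) mod int p = (c * u * B) mod int p" unfolding s by (simp add: mod_mult_left_eq)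
  also have "c * u * B = c * (u * B)" by (simp add: ac_simps)
  also have "c * (u * B) = c * (u * B + v * int p) + (- c * v) * int p" by (simp add: algebra_simps)
  also have "\<dots> = c + (- c * v) * int p" using uv by simp
  finally have "(int s * B) mod int p = c mod int p" by (simp only: mod_mult_self1)
  moreover have "s < p" using s assms(1) prime_gt_0_nat by (simp add: nat_less_iff s_def)
  ultimately show "\<exists>s. s < p \<and> (int s * B) mod int p = c mod int p" by blast
next
  fix s1 s2
  assume s1: "s1 < p \<and> (int s1 * B) mod int p = c mod int p"
    and s2: "s2 < p \<and> (int s2 * B) mod int p = c mod int p"
  then have "(int s1 * B) mod int p = (int s2 * B) mod int p" by simp
  then have "int p dvd int s1 * B - int s2 * B" by (simp only: mod_eq_dvd_iff)
  then have "int p dvd (int s1 - int s2) * B" by (simp add: algebra_simps)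
  then have "int p dvd int s1 - int s2" using assms prime_dvd_mult_iff[of "int p"] by simp
  moreover have "\<bar>int s1 - int s2\<bar> < int p" using s1 s2 by linarith
  ultimately show "s1 = s2" using dvd_imp_le_int[of "int s1 - int s2" "int p"] by fastforce
qed

lemma frak_a_degree_1:
  "frak_a p 1 B t = (THE s. s < p \<and> (int s * B 1) mod int p = (- t) mod int p)"
  unfolding frak_a_def frak_b_def digit_def by (rule arg_cong[where f = The]) (auto simp: fun_eq_iff)

lemma frak_a_degree_1_iff:
  assumes "prime p" "\<not> int p dvd B 1"
  shows "frak_a p 1 B t = s \<longleftrightarrow> s < p \<and> (int s * B 1) mod int p = (- t) mod int p"
  unfolding frak_a_degree_1
  using the1_equality[OF unique_residue_solution[OF assms]] theI'[OF unique_residue_solution[OF assms]]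
  by blast

lemma scaffold_degree_p_intro:
  assumes "subfield K" "prime p" "\<not> int p dvd b 1" "T \<ge> 1"
    and "\<And>t. lam t \<noteq> 0 \<and> vL (lam t) = t"
    and "\<And>t1 t2. t1 mod int p = t2 mod int p \<Longrightarrow> lam t1 * inverse (lam t2) \<in> K"
    and "\<And>\<sigma>. \<sigma> \<in> gal K \<Longrightarrow> Psi 1 \<sigma> \<in> K" "grp_act (gal K) (Psi 1) 1 = 0"
    and "\<And>t. frak_a p 1 b t \<ge> 1 \<Longrightarrow> \<exists>u. u \<in> K \<and> u \<noteq> 0 \<and> vL u = 0 \<and>
      cong_tol vL T (t + b 1) (grp_act (gal K) (Psi 1) (lam t)) (u * lam (t + b 1))"
    and "\<And>t. frak_a p 1 b t = 0 \<Longrightarrow> cong_tol vL T (t + b 1) (grp_act (gal K) (Psi 1) (lam t)) 0"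
    and "normalized_dval vL"
  shows "scaffold K vL p 1 b T lam Psi"
proof -
  have "frak_a p 1 b t < p" for t
    using frak_a_degree_1_iff[where B = b, OF assms(2,3), of t "frak_a p 1 b t"] by simp
  then have digit: "digit p 0 (frak_a p 1 b t) = frak_a p 1 b t" for t unfolding digit_def by simp
  have "\<exists>u. u \<in> K \<and> u \<noteq> 0 \<and> vL u = 0 \<and>
      (digit p 0 (frak_a p 1 b t) \<ge> 1 \<longrightarrow>
        cong_tol vL T (t + b 1) (grp_act (gal K) (Psi 1) (lam t)) (u * lam (t + b 1))) \<and>
      (\<not> digit p 0 (frak_a p 1 b t) \<ge> 1 \<longrightarrow>
        cong_tol vL T (t + b 1) (grp_act (gal K) (Psi 1) (lam t)) 0)" for t
  proof (cases "frak_a p 1 b t \<ge> 1")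
    case False
    then show ?thesis
      using assms(1,10) subfield_one digit discrete_valuation.v_one[OF discrete_valuation.intro, OF assms(11)]
      by (intro exI[of _ 1]) simp
  qed (use assms(9) digit in auto)
  then show ?thesis using assms(3-8) unfolding scaffold_def by (simp add: Let_def)
qed

section \<open>The power basis of a totally ramified extension of degree p\<close>

locale totally_ramified_p = discrete_valuation vL for vL :: "'a::field \<Rightarrow> int" +
  fixes K :: "'a set" and vK :: "'a \<Rightarrow> int" and p :: nat
  assumes subfield: "subfield K" and vK: "normalized_dval_on K vK" and prime: "prime p"
    and residue_char: "residue_char K vK p" and galois: "galois_of_degree K p"
    and ramified: "totally_ramified K vK vL p"
begin

lemma p_gt_1: "p > 1"
  using prime prime_gt_1_nat by blast

lemma p_dvd_choose: "0 < k \<Longrightarrow> k < p \<Longrightarrow> p dvd p choose k"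
  using dvd_choose_prime[OF _ _ _ prime] by simp

lemma vL_on_K: "x \<in> K \<Longrightarrow> x \<noteq> 0 \<Longrightarrow> vL x = int p * vK x"
  using ramified unfolding totally_ramified_def by blast

lemma p_dvd_vL_on_K: "x \<in> K \<Longrightarrow> x \<noteq> 0 \<Longrightarrow> int p dvd vL x"
  using vL_on_K by simp

definition piK :: 'a where
  "piK = (SOME x. x \<in> K \<and> x \<noteq> 0 \<and> vL x = int p)"

lemma piK: "piK \<in> K" "piK \<noteq> 0" "vL piK = int p"
proof -
  obtain x where "x \<in> K" "x \<noteq> 0" "vK x = 1" using vK unfolding normalized_dval_on_def by blast
  then have "\<exists>x. x \<in> K \<and> x \<noteq> 0 \<and> vL x = int p" using vL_on_K by auto
  then show "piK \<in> K" "piK \<noteq> 0" "vL piK = int p"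
    using someI_ex[of "\<lambda>x. x \<in> K \<and> x \<noteq> 0 \<and> vL x = int p"] unfolding piK_def by auto
qed

definition piL :: 'a where
  "piL = (SOME x. x \<noteq> 0 \<and> vL x = 1)"

lemma piL: "piL \<noteq> 0" "vL piL = 1"
  using someI_ex[of "\<lambda>x. x \<noteq> 0 \<and> vL x = 1"] v_surj[of 1] unfolding piL_def by auto

lemma val_ge_of_nat_p: "val_ge vL (of_nat p) 1"
proof (cases "(of_nat p :: 'a) = 0")
  case False
  then have "0 < vK (of_nat p)" using residue_char unfolding residue_char_def max_ideal_def by auto
  then have "1 * 1 \<le> int p * vK (of_nat p)" using p_gt_1 by (intro mult_mono) auto
  then show ?thesis using vL_on_K[OF subfield_of_nat[OF subfield] False] by (simp add: val_ge_def)
qed (simp add: val_ge_def)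

lemma v_of_nat_coprime:
  assumes "\<not> p dvd i"
  shows "(of_nat i :: 'a) \<noteq> 0 \<and> vL (of_nat i) = 0"
proof -
  obtain x y where "i * x = Suc (p * y)" using bezout_prime[OF prime assms] by blast
  then have eq: "(of_nat i :: 'a) * of_nat x = 1 + of_nat p * of_nat y"
    by (metis of_nat_Suc of_nat_mult)
  have "val_ge vL (of_nat p * of_nat y :: 'a) (1 + 0)"
    using val_ge_mult[OF val_ge_of_nat_p val_ge_of_nat] by simp
  then have unit: "(1::'a) + of_nat p * of_nat y \<noteq> 0 \<and> vL (1 + of_nat p * of_nat y :: 'a) = 0"
    using v_add_dominant[of 1 "of_nat p * of_nat y"] by simp
  then have nz: "(of_nat i :: 'a) \<noteq> 0" "(of_nat x :: 'a) \<noteq> 0" using eq by auto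
  have "vL (of_nat i :: 'a) \<ge> 0" "vL (of_nat x :: 'a) \<ge> 0"
    using val_ge_of_nat[of i] val_ge_of_nat[of x] nz by (auto simp: val_ge_def)
  moreover have "vL (of_nat i :: 'a) + vL (of_nat x) = 0"
    using v_mult[OF nz] eq unit by simp
  ultimately show ?thesis using nz by simp
qed

lemma v_coeff_piL_power:
  "c \<noteq> 0 \<Longrightarrow> c * piL ^ i \<noteq> 0 \<and> vL (c * piL ^ i) = vL c + int i"
  using piL by (simp add: v_mult v_power)

lemma exponent_eq_if_v_eq:
  assumes "c \<in> K" "c \<noteq> 0" "d \<in> K" "d \<noteq> 0" "i < p" "j < p" "vL c + int i = vL d + int j"
  shows "i = j"
proof (rule ccontr)
  assume "i \<noteq> j"
  have "int p dvd vL c - vL d" using p_dvd_vL_on_K assms(1-4) by (intro dvd_diff) auto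
  moreover have "int j - int i = vL c - vL d" using assms(7) by linarith
  ultimately have "int p dvd int j - int i" by simp
  moreover have "int j - int i \<noteq> 0" using \<open>i \<noteq> j\<close> by simp
  ultimately have "\<bar>int p\<bar> \<le> \<bar>int j - int i\<bar>" using dvd_imp_le_int by blast
  then show False using assms(5,6) by linarith
qed

lemma v_power_basis_sum:
  assumes "\<forall>i<p. c i \<in> K" "S = {i. i < p \<and> c i \<noteq> 0}" "S \<noteq> {}"
  shows "(\<Sum>i<p. c i * piL ^ i) \<noteq> 0 \<and> vL (\<Sum>i<p. c i * piL ^ i) = Min ((\<lambda>i. vL (c i * piL ^ i)) ` S)"
proof -
  have "(\<Sum>i<p. c i * piL ^ i) = (\<Sum>i\<in>S. c i * piL ^ i)"
    using assms(2) by (intro sum.mono_neutral_right) auto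
  moreover have "(\<Sum>i\<in>S. c i * piL ^ i) \<noteq> 0 \<and> vL (\<Sum>i\<in>S. c i * piL ^ i) = Min ((\<lambda>i. vL (c i * piL ^ i)) ` S)"
  proof (rule v_sum_distinct)
    fix i j assume "i \<in> S" "j \<in> S" "i \<noteq> j"
    then show "vL (c i * piL ^ i) \<noteq> vL (c j * piL ^ j)"
      using assms v_coeff_piL_power exponent_eq_if_v_eq[of "c i" "c j" i j] by auto
  qed (use assms v_coeff_piL_power in auto)
  ultimately show ?thesis by simp
qed

lemma power_basis_spans: "\<exists>c. (\<forall>i<p. c i \<in> K) \<and> y = (\<Sum>i<p. c i * piL ^ i)"
proof (rule independent_spans[OF subfield])
  show "field_degree K p" using galois unfolding galois_of_degree_def by blast
  show "\<forall>i<p. c i = 0" if "\<forall>i<p. c i \<in> K" "(\<Sum>i<p. c i * piL ^ i) = 0" for c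
    using v_power_basis_sum[of c "{i. i < p \<and> c i \<noteq> 0}"] that by auto
qed

definition coord :: "'a \<Rightarrow> nat \<Rightarrow> 'a" where
  "coord y = (SOME c. (\<forall>i<p. c i \<in> K) \<and> y = (\<Sum>i<p. c i * piL ^ i))"

lemma coord: "\<forall>i<p. coord y i \<in> K" "y = (\<Sum>i<p. coord y i * piL ^ i)"
  using someI_ex[OF power_basis_spans[of y]] unfolding coord_def by auto

lemma coord_leading_term:
  assumes "y \<noteq> 0"
  defines "r \<equiv> nat (vL y mod int p)"
  shows "r < p \<and> coord y r \<noteq> 0 \<and> vL (coord y r * piL ^ r) = vL y
    \<and> (\<forall>i<p. i \<noteq> r \<longrightarrow> val_ge vL (coord y i * piL ^ i) (vL y + 1))"
proof -
  define S where "S = {i. i < p \<and> coord y i \<noteq> 0}"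
  have "S \<noteq> {}" using coord(2)[of y] assms(1) unfolding S_def by force
  then have vy: "vL y = Min ((\<lambda>i. vL (coord y i * piL ^ i)) ` S)"
    using v_power_basis_sum[OF coord(1) S_def] coord(2)[of y] by simp
  have "Min ((\<lambda>i. vL (coord y i * piL ^ i)) ` S) \<in> (\<lambda>i. vL (coord y i * piL ^ i)) ` S"
    using \<open>S \<noteq> {}\<close> unfolding S_def by (intro Min_in) auto
  then obtain j where j: "j \<in> S" "vL (coord y j * piL ^ j) = vL y" using vy by auto
  have jK: "coord y j \<in> K" "coord y j \<noteq> 0" "j < p" using j coord(1) unfolding S_def by auto
  have "vL y = vL (coord y j) + int j" using j v_coeff_piL_power jK by simp
  moreover have "int p dvd vL (coord y j)" using p_dvd_vL_on_K jK by simp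
  ultimately have "vL y mod int p = int j" using jK(3) by (auto simp: mod_add_left_eq[symmetric])
  then have jr: "j = r" unfolding r_def by simp
  have "val_ge vL (coord y i * piL ^ i) (vL y + 1)" if i: "i < p" "i \<noteq> r" for i
  proof (cases "coord y i = 0")
    case False
    then have "i \<in> S" using i unfolding S_def by simp
    then have "vL (coord y i * piL ^ i) \<ge> vL y" using vy unfolding S_def by simp
    moreover have "vL (coord y i * piL ^ i) \<noteq> vL (coord y j * piL ^ j)"
      using v_coeff_piL_power jK exponent_eq_if_v_eq[of "coord y i" "coord y j" i j] coord(1) i False jr
      by auto
    ultimately show ?thesis using j by (simp add: val_ge_def)
  qed simp
  then show ?thesis using jr jK j by simp
qed

end

section \<open>Galois automorphisms\<close>

context
  fixes K :: "'a::field set" and \<sigma> :: "'a \<Rightarrow> 'a"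
  assumes \<sigma>: "\<sigma> \<in> gal K"
begin

lemma gal_add: "\<sigma> (x + y) = \<sigma> x + \<sigma> y"
  and gal_mult: "\<sigma> (x * y) = \<sigma> x * \<sigma> y"
  and gal_one: "\<sigma> 1 = 1"
  and gal_fixes: "k \<in> K \<Longrightarrow> \<sigma> k = k"
  and gal_bij: "bij \<sigma>"
  using \<sigma> unfolding gal_def by blast+

lemma gal_zero: "\<sigma> 0 = 0"
proof -
  have "\<sigma> 0 + \<sigma> 0 = \<sigma> 0 + 0" using gal_add[of 0 0] by simp
  then show ?thesis by (rule add_left_imp_eq)
qed

lemma gal_diff: "\<sigma> (x - y) = \<sigma> x - \<sigma> y"
proof -
  have "\<sigma> (x - y) + \<sigma> y = \<sigma> x" using gal_add[of "x - y" y] by simp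
  then show ?thesis by (simp add: eq_diff_eq)
qed

lemma gal_eq_iff: "\<sigma> x = \<sigma> y \<longleftrightarrow> x = y"
  using gal_bij by (auto simp: bij_def inj_eq)

lemma gal_nonzero: "x \<noteq> 0 \<Longrightarrow> \<sigma> x \<noteq> 0"
  using gal_eq_iff[of x 0] gal_zero by simp

lemma gal_inverse: "\<sigma> (inverse x) = inverse (\<sigma> x)"
proof (cases "x = 0")
  case False
  then have "\<sigma> x * \<sigma> (inverse x) = 1" using gal_mult[of x "inverse x"] gal_one by simp
  then show ?thesis by (metis inverse_unique)
qed (simp add: gal_zero)

lemma gal_divide: "\<sigma> (x / y) = \<sigma> x / \<sigma> y"
  by (simp add: divide_inverse gal_mult gal_inverse)

lemma gal_power: "\<sigma> (x ^ n) = \<sigma> x ^ n"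
  by (induction n) (simp_all add: gal_one gal_mult)

lemma gal_sum: "\<sigma> (sum f S) = (\<Sum>i\<in>S. \<sigma> (f i))"
  by (induction S rule: infinite_finite_induct) (simp_all add: gal_zero gal_add)

lemma gal_prod: "\<sigma> (prod f S) = (\<Prod>i\<in>S. \<sigma> (f i))"
  by (induction S rule: infinite_finite_induct) (simp_all add: gal_one gal_mult)

lemma gal_of_nat: "\<sigma> (of_nat n) = of_nat n"
  by (induction n) (simp_all add: gal_zero gal_one gal_add)

lemma gal_inv_into: "inv_into UNIV \<sigma> \<in> gal K"
proof -
  have \<sigma>\<sigma>': "\<sigma> (inv_into UNIV \<sigma> x) = x" and \<sigma>'\<sigma>: "inv_into UNIV \<sigma> (\<sigma> x) = x" for x
    using gal_bij by (simp_all add: bij_is_surj surj_f_inv_f bij_is_inj inv_f_f)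
  have "inv_into UNIV \<sigma> (x + y) = inv_into UNIV \<sigma> x + inv_into UNIV \<sigma> y" for x y
    by (metis \<sigma>\<sigma>' \<sigma>'\<sigma> gal_add)
  moreover have "inv_into UNIV \<sigma> (x * y) = inv_into UNIV \<sigma> x * inv_into UNIV \<sigma> y" for x y
    by (metis \<sigma>\<sigma>' \<sigma>'\<sigma> gal_mult)
  moreover have "inv_into UNIV \<sigma> 1 = 1" using \<sigma>'\<sigma>[of 1] gal_one by simp
  moreover have "\<forall>k\<in>K. inv_into UNIV \<sigma> k = k" using \<sigma>'\<sigma> gal_fixes by metis
  ultimately show ?thesis
    using gal_bij bij_imp_bij_inv unfolding gal_def by blast
qed

end

definition gal_group :: "'a::field set \<Rightarrow> ('a \<Rightarrow> 'a) monoid" where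
  "gal_group K = \<lparr>carrier = gal K, mult = (\<circ>), one = id\<rparr>"

lemma gal_id: "id \<in> gal K"
  unfolding gal_def by simp

lemma gal_comp: "\<sigma> \<in> gal K \<Longrightarrow> \<tau> \<in> gal K \<Longrightarrow> \<sigma> \<circ> \<tau> \<in> gal K"
  unfolding gal_def by (auto intro: bij_comp)

lemma gal_funpow: "\<sigma> \<in> gal K \<Longrightarrow> \<sigma> ^^ n \<in> gal K"
  by (induction n) (simp_all add: gal_id gal_comp)

lemma group_gal_group: "group (gal_group K)"
proof (rule groupI)
  fix x assume x: "x \<in> carrier (gal_group K)"
  then have "inj x" using gal_bij[where \<sigma> = x] bij_is_inj unfolding gal_group_def by auto
  then have "inv_into UNIV x \<circ> x = id" by (simp add: fun_eq_iff)
  then show "\<exists>y\<in>carrier (gal_group K). y \<otimes>\<^bsub>gal_group K\<^esub> x = \<one>\<^bsub>gal_group K\<^esub>"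
    using x gal_inv_into[where \<sigma> = x] unfolding gal_group_def by auto
qed (auto simp: gal_group_def gal_comp gal_id comp_assoc)

lemma gal_funpow_card: "\<sigma> \<in> gal K \<Longrightarrow> \<sigma> ^^ card (gal K) = id"
proof -
  assume "\<sigma> \<in> gal K"
  moreover have "x [^]\<^bsub>gal_group K\<^esub> n = x ^^ n" for x and n :: nat
    by (induction n) (simp_all add: gal_group_def funpow_Suc_right del: funpow.simps)
  ultimately show ?thesis
    using group.pow_order_eq_1[OF group_gal_group[of K], where a = \<sigma>] unfolding order_def gal_group_def by simp
qed

context totally_ramified_p
begin

lemma gal_apply_coord: "\<sigma> \<in> gal K \<Longrightarrow> \<sigma> y = (\<Sum>i<p. coord y i * \<sigma> piL ^ i)"
  using coord(1)[of y] arg_cong[OF coord(2)[of y], of \<sigma>]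
  by (simp add: gal_sum gal_mult gal_power gal_fixes)

lemma gal_sub_coord: "\<sigma> \<in> gal K \<Longrightarrow> \<sigma> y - y = (\<Sum>i<p. coord y i * (\<sigma> piL ^ i - piL ^ i))"
proof -
  assume "\<sigma> \<in> gal K"
  then have "\<sigma> y - y = (\<Sum>i<p. coord y i * \<sigma> piL ^ i) - (\<Sum>i<p. coord y i * piL ^ i)"
    using gal_apply_coord coord(2)[of y] by metis
  then show ?thesis by (simp add: sum_subtractf[symmetric] right_diff_distrib)
qed

lemma val_ge_coord_piL_power_p: "i < p \<Longrightarrow> val_ge vL (coord (piL ^ p) i) (int p)"
proof -
  assume i: "i < p"
  have v: "piL ^ p \<noteq> 0" "vL (piL ^ p) = int p" using piL by (simp_all add: v_power)
  then have "nat (vL (piL ^ p) mod int p) = 0" by simp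
  note lead = coord_leading_term[OF v(1), unfolded this]
  show ?thesis
  proof (cases "i = 0 \<or> coord (piL ^ p) i = 0")
    case False
    have cK: "coord (piL ^ p) i \<in> K" using coord(1) i by simp
    have "val_ge vL (coord (piL ^ p) i * piL ^ i) (vL (piL ^ p) + 1)" using lead i False by blast
    then have pos: "vL (coord (piL ^ p) i) > 0"
      using v_coeff_piL_power[of "coord (piL ^ p) i" i] False v i by (simp add: val_ge_def)
    obtain k where k: "vL (coord (piL ^ p) i) = int p * k" using p_dvd_vL_on_K cK False by blast
    then have "k \<ge> 1" using pos p_gt_1 by (simp add: zero_less_mult_iff)
    then show ?thesis using k mult_left_mono[of 1 k "int p"] by (simp add: val_ge_def)
  qed (use lead v in \<open>auto simp: val_ge_def\<close>)
qed

lemma gal_v_piL: "\<sigma> \<in> gal K \<Longrightarrow> \<sigma> piL \<noteq> 0 \<and> vL (\<sigma> piL) = 1"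
proof -
  assume \<sigma>: "\<sigma> \<in> gal K"
  have "piL ^ p \<noteq> 0" "vL (piL ^ p) = int p" using piL by (simp_all add: v_power)
  moreover from this have "nat (vL (piL ^ p) mod int p) = 0" by simp
  ultimately have "coord (piL ^ p) 0 \<noteq> 0" "vL (coord (piL ^ p) 0) = int p"
    using coord_leading_term[of "piL ^ p"] p_gt_1 by auto
  moreover have "\<sigma> piL \<noteq> 0" using gal_nonzero[OF \<sigma>] piL by simp
  moreover have "\<sigma> piL ^ p = (\<Sum>i<p. coord (piL ^ p) i * \<sigma> piL ^ i)"
    using gal_apply_coord[OF \<sigma>, of "piL ^ p"] gal_power[OF \<sigma>] by simp
  ultimately show ?thesis
    using v_root_of_eisenstein[of p "\<sigma> piL" "coord (piL ^ p)"] val_ge_coord_piL_power_p p_gt_1 by simp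
qed

lemma gal_v: 
  assumes \<sigma>: "\<sigma> \<in> gal K" and "y \<noteq> 0"
  shows "\<sigma> y \<noteq> 0 \<and> vL (\<sigma> y) = vL y"
proof -
  define q where "q = \<sigma> piL"
  have q: "q \<noteq> 0" "vL q = 1" using gal_v_piL[OF \<sigma>] unfolding q_def by auto
  have v_term: "vL (c * q ^ i) = vL (c * piL ^ i)" if "c \<noteq> 0" for c i
    using q piL that by (simp add: v_mult v_power)
  define r where "r = nat (vL y mod int p)"
  note lead = coord_leading_term[OF assms(2), folded r_def]
  have "(\<Sum>i\<in>{..<p}. coord y i * q ^ i) \<noteq> 0 \<and> vL (\<Sum>i\<in>{..<p}. coord y i * q ^ i) = vL (coord y r * q ^ r)"
  proof (rule v_sum_dominant)
    fix i assume i: "i \<in> {..<p} - {r}"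
    show "val_ge vL (coord y i * q ^ i) (vL (coord y r * q ^ r) + 1)"
      using lead i v_term[of "coord y i" i] v_term[of "coord y r" r] v_coeff_piL_power[of "coord y i" i]
      by (cases "coord y i = 0") (auto simp: val_ge_def)
  qed (use lead q in auto)
  moreover have "vL (coord y r * q ^ r) = vL y" using v_term lead by simp
  ultimately show ?thesis using gal_apply_coord[OF \<sigma>, of y] unfolding q_def by simp
qed

lemma gal_val_ge_iff: "\<sigma> \<in> gal K \<Longrightarrow> val_ge vL (\<sigma> y) m \<longleftrightarrow> val_ge vL y m"
  using gal_v[of \<sigma> y] gal_zero[of \<sigma> K] by (cases "y = 0") (auto simp: val_ge_def)

lemma gal_eq_id_iff:
  assumes "\<sigma> \<in> gal K"
  shows "\<sigma> = id \<longleftrightarrow> \<sigma> piL = piL"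
proof
  assume "\<sigma> piL = piL"
  show "\<sigma> = id"
  proof
    show "\<sigma> y = id y" for y
      using gal_apply_coord[OF assms, of y] coord(2)[of y] \<open>\<sigma> piL = piL\<close> by simp
  qed
qed simp

end

section \<open>Ramification breaks\<close>

context totally_ramified_p
begin

definition ram_break :: "('a \<Rightarrow> 'a) \<Rightarrow> int" where
  "ram_break \<sigma> = vL (\<sigma> piL - piL) - 1"

lemma val_ge_gal_power_diff:
  assumes "\<sigma> \<in> gal K" "i \<ge> 1"
  shows "val_ge vL (c * (\<sigma> piL ^ i - piL ^ i)) (vL c + int i + ram_break \<sigma>)"
proof -
  have "val_ge vL (\<sigma> piL) 1" "val_ge vL piL 1"
    using gal_v_piL[OF assms(1)] piL by (simp_all add: val_ge_def)
  then have "val_ge vL (\<sigma> piL ^ i - piL ^ i) (vL (\<sigma> piL - piL) + (int i - 1))"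
    using val_ge_power_diff assms(2) by blast
  then have "val_ge vL (c * (\<sigma> piL ^ i - piL ^ i)) (vL c + (vL (\<sigma> piL - piL) + (int i - 1)))"
    using val_ge_mult[OF val_ge_self] by blast
  then show ?thesis unfolding ram_break_def by (simp add: algebra_simps)
qed

lemma val_ge_coord_term: "y \<noteq> 0 \<Longrightarrow> i < p \<Longrightarrow> val_ge vL (coord y i * piL ^ i) (vL y)"
  using coord_leading_term[of y] val_ge_mono
  by (cases "i = nat (vL y mod int p)") (auto simp: val_ge_def)

lemma v_coord_nonneg:
  assumes "y \<noteq> 0" "vL y \<ge> 0" "i < p" "coord y i \<noteq> 0"
  shows "vL (coord y i) \<ge> 0"
proof -
  have cK: "coord y i \<in> K" using coord(1) assms(3) by simp
  have "vL (coord y i) + int i \<ge> 0"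
    using val_ge_coord_term[OF assms(1,3)] v_coeff_piL_power[OF assms(4), of i] assms(2) piL
    by (simp add: val_ge_def)
  moreover obtain k where k: "vL (coord y i) = int p * k" using p_dvd_vL_on_K cK assms(4) by blast
  ultimately have "int p * (k + 1) > 0" using assms(3) by (simp add: algebra_simps)
  then have "k \<ge> 0" using p_gt_1 by (simp add: zero_less_mult_iff)
  then show ?thesis using k by simp
qed

lemma ram_group_iff:
  assumes \<sigma>: "\<sigma> \<in> gal K" "\<sigma> \<noteq> id"
  shows "\<sigma> \<in> ram_group K vL j \<longleftrightarrow> j \<le> ram_break \<sigma>"
proof
  assume "\<sigma> \<in> ram_group K vL j"
  then have "val_ge vL (\<sigma> piL - piL) (j + 1)" using piL unfolding ram_group_def val_ge_def by auto
  then show "j \<le> ram_break \<sigma>" using gal_eq_id_iff[OF \<sigma>(1)] \<sigma>(2) unfolding ram_break_def val_ge_def by simp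
next
  assume j: "j \<le> ram_break \<sigma>"
  have "val_ge vL (\<sigma> y - y) (j + 1)" if "y = 0 \<or> vL y \<ge> 0" for y
  proof (cases "y = 0")
    case False
    show ?thesis unfolding gal_sub_coord[OF \<sigma>(1)]
    proof (rule val_ge_sum)
      fix i assume i: "i \<in> {..<p}"
      show "val_ge vL (coord y i * (\<sigma> piL ^ i - piL ^ i)) (j + 1)"
      proof (cases "i = 0 \<or> coord y i = 0")
        case nz: False
        have "vL (coord y i) \<ge> 0" using v_coord_nonneg[OF False] that i nz False by simp
        then have "vL (coord y i) + int i + ram_break \<sigma> \<ge> j + 1" using nz j by simp
        moreover have "val_ge vL (coord y i * (\<sigma> piL ^ i - piL ^ i)) (vL (coord y i) + int i + ram_break \<sigma>)"
          using val_ge_gal_power_diff[OF \<sigma>(1)] nz by simp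
        ultimately show ?thesis using val_ge_mono by blast
      qed auto
    qed
  qed (simp add: gal_zero[OF \<sigma>(1)])
  then show "\<sigma> \<in> ram_group K vL j"
    using \<sigma>(1) gal_zero[OF \<sigma>(1)] unfolding ram_group_def val_ge_def by simp
qed

lemma finite_gal: "finite (gal K)" and card_gal: "card (gal K) = p"
  using galois p_gt_1 unfolding galois_of_degree_def by (auto intro: card_ge_0_finite)

lemma gal_nontrivial: "gal K - {id} \<noteq> {}"
proof
  assume "gal K - {id} = {}"
  then have "card (gal K) \<le> card {id}" using card_mono[of "{id}" "gal K"] by auto
  then show False using card_gal p_gt_1 by simp
qed

definition b1 :: int where
  "b1 = Max (ram_break ` (gal K - {id}))"

lemma b1_attained: "\<exists>\<sigma>\<in>gal K - {id}. ram_break \<sigma> = b1"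
proof -
  have "b1 \<in> ram_break ` (gal K - {id})"
    unfolding b1_def using finite_gal gal_nontrivial by (intro Max_in) auto
  then show ?thesis by auto
qed

lemma card_ram_group_gt_1_iff: "card (ram_group K vL j) > 1 \<longleftrightarrow> j \<le> b1"
proof -
  have fin: "finite (ram_group K vL j)"
    using finite_gal by (rule finite_subset[rotated]) (auto simp: ram_group_def)
  have id: "id \<in> ram_group K vL j" by (simp add: ram_group_def gal_id)
  have "card (ram_group K vL j) > 1 \<longleftrightarrow> (\<exists>\<sigma>\<in>gal K - {id}. \<sigma> \<in> ram_group K vL j)"
  proof
    assume "card (ram_group K vL j) > 1"
    moreover have "card (ram_group K vL j) \<le> 1" if "ram_group K vL j \<subseteq> {id}"
      using card_mono[OF _ that] by simp
    ultimately have "\<not> ram_group K vL j \<subseteq> {id}" by linarith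
    then show "\<exists>\<sigma>\<in>gal K - {id}. \<sigma> \<in> ram_group K vL j" unfolding ram_group_def by blast
  next
    assume "\<exists>\<sigma>\<in>gal K - {id}. \<sigma> \<in> ram_group K vL j"
    then obtain \<sigma> where "\<sigma> \<in> gal K - {id}" "\<sigma> \<in> ram_group K vL j" by blast
    then have "card {id, \<sigma>} \<le> card (ram_group K vL j)" using id fin by (intro card_mono) auto
    then show "card (ram_group K vL j) > 1" using \<open>\<sigma> \<in> gal K - {id}\<close> by auto
  qed
  also have "\<dots> \<longleftrightarrow> (\<exists>\<sigma>\<in>gal K - {id}. j \<le> ram_break \<sigma>)"
    using ram_group_iff by blast
  also have "\<dots> \<longleftrightarrow> j \<le> b1"
  proof
    assume "\<exists>\<sigma>\<in>gal K - {id}. j \<le> ram_break \<sigma>"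
    then obtain \<sigma> where "\<sigma> \<in> gal K - {id}" "j \<le> ram_break \<sigma>" by blast
    moreover have "ram_break \<sigma> \<le> b1" unfolding b1_def using calculation finite_gal by (intro Max_ge) auto
    ultimately show "j \<le> b1" by simp
  qed (use b1_attained in force)
  finally show ?thesis .
qed

lemma lower_break_eq_b1: "lower_break K vL p 1 1 = b1"
  unfolding lower_break_def using card_ram_group_gt_1_iff by (intro Greatest_equality) auto

lemma val_ge_power_p_sub_one:
  assumes "val_ge vL u 0"
  shows "val_ge vL ((u - 1) ^ p - (u ^ p - 1)) 1"
proof -
  define g where "g k = of_nat (p choose k) * u ^ k * (-1 :: 'a) ^ (p - k)" for k
  have "(u + (-1)) ^ p = (\<Sum>k\<le>p. g k)" unfolding g_def by (rule binomial_ring)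
  also have "{..p} = insert 0 (insert p {1..<p})" using p_gt_1 by auto
  finally have eq: "(u - 1) ^ p - (u ^ p - 1) = ((-1) ^ p + 1) + sum g {1..<p}"
    using p_gt_1 by (simp add: g_def)
  have "val_ge vL ((-1) ^ p + 1 :: 'a) 1"
  proof (cases "odd p")
    case False
    then have "p = 2" using prime primes_dvd_imp_eq[OF two_is_prime_nat prime] by auto
    then show ?thesis using val_ge_of_nat_p by simp
  qed simp
  moreover have "val_ge vL (sum g {1..<p}) 1"
  proof (rule val_ge_sum)
    fix k assume "k \<in> {1..<p}"
    then obtain m where m: "p choose k = p * m" using p_dvd_choose[of k] by (auto elim!: dvdE)
    have "val_ge vL (of_nat p * of_nat m * u ^ k * (-1) ^ (p - k)) (1 + 0 + int k * 0 + 0)"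
      by (intro val_ge_mult val_ge_of_nat_p val_ge_of_nat val_ge_power assms) (simp add: val_ge_def v_power)
    then show "val_ge vL (g k) 1" unfolding g_def m by simp
  qed
  ultimately show ?thesis unfolding eq by (rule val_ge_add)
qed

lemma unit_congruent_to_K:
  assumes "u \<noteq> 0" "vL u = 0"
  obtains c where "c \<in> K" "c \<noteq> 0" "vL c = 0" "val_ge vL (u - c) 1"
proof
  have "nat (vL u mod int p) = 0" using assms(2) by simp
  note lead = coord_leading_term[OF assms(1), unfolded this]
  show "coord u 0 \<in> K" "coord u 0 \<noteq> 0" "vL (coord u 0) = 0"
    using lead assms(2) coord(1)[of u] p_gt_1 by auto
  have "u = (\<Sum>i<p. coord u i * piL ^ i)" by (rule coord(2))
  also have "\<dots> = coord u 0 * piL ^ 0 + (\<Sum>i\<in>{..<p} - {0}. coord u i * piL ^ i)"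
    using p_gt_1 by (intro sum.remove) auto
  finally have "u - coord u 0 = (\<Sum>i\<in>{..<p} - {0}. coord u i * piL ^ i)"
    by (metis add_diff_cancel_left' mult_1_right power_0)
  moreover have "val_ge vL (\<Sum>i\<in>{..<p} - {0}. coord u i * piL ^ i) 1"
    using lead assms(2) by (intro val_ge_sum) auto
  ultimately show "val_ge vL (u - coord u 0) 1" by simp
qed

text \<open>\<open>\<sigma>\<pi>/\<pi>\<close> is a unit whose conjugates multiply to \<open>1\<close>, so its \<open>p\<close>-th power is \<open>\<equiv> 1\<close>;
  as the residue characteristic is \<open>p\<close>, it is itself \<open>\<equiv> 1\<close>.\<close>
lemma ram_break_pos:
  assumes \<sigma>: "\<sigma> \<in> gal K" "\<sigma> \<noteq> id"
  shows "ram_break \<sigma> \<ge> 1"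
proof -
  define u where "u = \<sigma> piL / piL"
  have u: "u \<noteq> 0" "vL u = 0" using gal_v_piL[OF \<sigma>(1)] piL unfolding u_def by (simp_all add: v_divide)
  obtain c where c: "c \<in> K" "c \<noteq> 0" "vL c = 0" and uc: "val_ge vL (u - c) 1"
    using unit_congruent_to_K[OF u] by blast
  have \<sigma>k: "\<sigma> ^^ k \<in> gal K" for k using gal_funpow[OF \<sigma>(1)] .
  have "(\<Prod>k<p. (\<sigma> ^^ k) u) = (\<Prod>k<p. (\<sigma> ^^ Suc k) piL / (\<sigma> ^^ k) piL)"
    unfolding u_def by (simp add: gal_divide[OF \<sigma>k] funpow_Suc_right del: funpow.simps)
  also have "\<dots> = (\<sigma> ^^ p) piL / piL"
    using prod_ratio_telescope[of "\<lambda>k. (\<sigma> ^^ k) piL" p] gal_nonzero[OF \<sigma>k] piL by simp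
  also have "\<dots> = 1" using gal_funpow_card[OF \<sigma>(1)] card_gal piL by simp
  finally have norm: "(\<Prod>k<p. c + ((\<sigma> ^^ k) u - c)) = 1" by simp
  have "val_ge vL ((\<sigma> ^^ k) u - c) 1" for k
    using uc gal_val_ge_iff[OF \<sigma>k] gal_diff[OF \<sigma>k] gal_fixes[OF \<sigma>k c(1)] by metis
  then have "val_ge vL ((\<Prod>k<p. c + ((\<sigma> ^^ k) u - c)) - (\<Prod>k<p. c)) (1 + (int (card {..<p}) - 1) * 0)"
    using p_gt_1 c by (intro val_ge_prod_perturb) (auto simp: val_ge_def)
  then have a1: "val_ge vL (1 - c ^ p) 1" using norm by simp
  have "val_ge vL ((\<Prod>k<p. c + (u - c)) - (\<Prod>k<p. c)) (1 + (int (card {..<p}) - 1) * 0)"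
    using p_gt_1 c uc by (intro val_ge_prod_perturb) (auto simp: val_ge_def)
  then have a2: "val_ge vL (u ^ p - c ^ p) 1" by simp
  have "val_ge vL (((u - 1) ^ p - (u ^ p - 1)) + (u ^ p - 1)) 1"
    using val_ge_diff[OF a2 a1] u by (intro val_ge_add val_ge_power_p_sub_one) (simp_all add: val_ge_def)
  then have "val_ge vL ((u - 1) ^ p) 1" by simp
  moreover have "u - 1 \<noteq> 0"
    using gal_eq_id_iff[OF \<sigma>(1)] \<sigma>(2) piL unfolding u_def by (auto simp: field_simps)
  ultimately have "int p * vL (u - 1) \<ge> 1" by (simp add: val_ge_def v_power)
  then have "vL (u - 1) \<ge> 1" using p_gt_1 by (smt (verit) mult_nonneg_nonpos of_nat_0_le_iff)
  moreover have "\<sigma> piL - piL = piL * (u - 1)" unfolding u_def using piL by (simp add: field_simps)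
  ultimately show ?thesis using v_mult piL \<open>u - 1 \<noteq> 0\<close> unfolding ram_break_def by simp
qed

lemma b1_pos: "b1 \<ge> 1"
proof -
  obtain \<sigma> where "\<sigma> \<in> gal K" "\<sigma> \<noteq> id" "ram_break \<sigma> = b1" using b1_attained by blast
  then show ?thesis using ram_break_pos[of \<sigma>] by simp
qed

end

section \<open>The operator \<open>\<Delta>\<close>\<close>

context totally_ramified_p
begin

definition sigma0 :: "'a \<Rightarrow> 'a" where
  "sigma0 = (SOME \<sigma>. \<sigma> \<in> gal K - {id} \<and> ram_break \<sigma> = b1)"

lemma sigma0: "sigma0 \<in> gal K" "sigma0 \<noteq> id" "ram_break sigma0 = b1"
  using someI_ex[of "\<lambda>\<sigma>. \<sigma> \<in> gal K - {id} \<and> ram_break \<sigma> = b1"] b1_attained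
  unfolding sigma0_def by auto

definition \<Delta> :: "'a \<Rightarrow> 'a" where
  "\<Delta> y = sigma0 y - y"

lemma \<Delta>_coord: "\<Delta> y = (\<Sum>i<p. coord y i * (sigma0 piL ^ i - piL ^ i))"
  unfolding \<Delta>_def by (rule gal_sub_coord[OF sigma0(1)])

lemma \<Delta>_zero: "\<Delta> 0 = 0" and \<Delta>_one: "\<Delta> 1 = 0"
  unfolding \<Delta>_def by (simp_all add: gal_zero[OF sigma0(1)] gal_one[OF sigma0(1)])

lemma \<Delta>_smult: "c \<in> K \<Longrightarrow> \<Delta> (c * y) = c * \<Delta> y"
  unfolding \<Delta>_def by (simp add: gal_mult[OF sigma0(1)] gal_fixes[OF sigma0(1)] algebra_simps)

lemma v_\<Delta>_power_piL:
  assumes "c \<noteq> 0" "1 \<le> i" "i < p"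
  shows "c * (sigma0 piL ^ i - piL ^ i) \<noteq> 0 \<and> vL (c * (sigma0 piL ^ i - piL ^ i)) = vL c + int i + b1"
proof -
  define e where "e = sigma0 piL / piL - 1"
  have piL_e: "sigma0 piL = piL * (1 + e)" unfolding e_def using piL by (simp add: field_simps)
  then have "sigma0 piL - piL = piL * e" by (simp add: algebra_simps)
  moreover have "sigma0 piL - piL \<noteq> 0" using gal_eq_id_iff[OF sigma0(1)] sigma0(2) by simp
  ultimately have e: "e \<noteq> 0" "vL e = b1"
    using v_mult[OF piL(1)] piL sigma0(3) unfolding ram_break_def by auto
  have "\<not> p dvd i" using assms(2,3) by (auto dest: dvd_imp_le)
  then have "(of_nat i :: 'a) \<noteq> 0 \<and> vL (of_nat i :: 'a) = 0" by (rule v_of_nat_coprime)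
  then have ie: "of_nat i * e \<noteq> 0" "vL (of_nat i * e) = b1" using e v_mult by auto
  have "val_ge vL ((1 + e) ^ i - 1 - of_nat i * e) (2 * b1)"
    using val_ge_binomial_remainder[of e b1 i] e b1_pos by (simp add: val_ge_def)
  then have "val_ge vL ((1 + e) ^ i - 1 - of_nat i * e) (vL (of_nat i * e) + 1)"
    using ie b1_pos val_ge_mono by fastforce
  from v_add_dominant[OF ie(1) this]
  have "(1 + e) ^ i - 1 \<noteq> 0 \<and> vL ((1 + e) ^ i - 1) = b1" using ie(2) by simp
  moreover have "sigma0 piL ^ i - piL ^ i = piL ^ i * ((1 + e) ^ i - 1)"
    unfolding piL_e power_mult_distrib by (simp add: algebra_simps)
  ultimately show ?thesis using assms(1) piL by (simp add: v_mult v_power)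
qed

lemma val_ge_\<Delta>: "val_ge vL y m \<Longrightarrow> val_ge vL (\<Delta> y) (m + b1)"
proof (cases "y = 0")
  case False
  assume "val_ge vL y m"
  then have m: "m \<le> vL y" using False by (simp add: val_ge_def)
  have "val_ge vL (\<Delta> y) (vL y + b1)" unfolding \<Delta>_coord
  proof (rule val_ge_sum)
    fix i assume i: "i \<in> {..<p}"
    show "val_ge vL (coord y i * (sigma0 piL ^ i - piL ^ i)) (vL y + b1)"
    proof (cases "i = 0 \<or> coord y i = 0")
      case nz: False
      have "vL (coord y i) + int i \<ge> vL y"
        using val_ge_coord_term[OF False, of i] i v_coeff_piL_power[of "coord y i" i] nz
        by (simp add: val_ge_def)
      then show ?thesis using v_\<Delta>_power_piL[of "coord y i" i] nz i by (simp add: val_ge_def)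
    qed auto
  qed
  then show ?thesis using m val_ge_mono by fastforce
qed (simp add: \<Delta>_zero)

lemma val_ge_\<Delta>_funpow: "val_ge vL y m \<Longrightarrow> val_ge vL ((\<Delta> ^^ k) y) (m + int k * b1)"
proof (induction k)
  case (Suc k)
  then have "val_ge vL (\<Delta> ((\<Delta> ^^ k) y)) (m + int k * b1 + b1)" using val_ge_\<Delta> by blast
  then show ?case by (simp add: algebra_simps)
qed simp

lemma v_\<Delta>:
  assumes "y \<noteq> 0" "\<not> int p dvd vL y"
  shows "\<Delta> y \<noteq> 0 \<and> vL (\<Delta> y) = vL y + b1"
proof -
  define r where "r = nat (vL y mod int p)"
  note lead = coord_leading_term[OF assms(1), folded r_def]
  have "vL y mod int p \<ge> 0" using p_gt_1 by simp
  then have "r \<noteq> 0" using assms(2) unfolding r_def by (simp add: dvd_eq_mod_eq_0)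
  define f where "f i = coord y i * (sigma0 piL ^ i - piL ^ i)" for i
  have fr: "f r \<noteq> 0 \<and> vL (f r) = vL y + b1"
    using v_\<Delta>_power_piL[of "coord y r" r] v_coeff_piL_power[of "coord y r" r] lead \<open>r \<noteq> 0\<close>
    unfolding f_def by simp
  have "sum f {..<p} \<noteq> 0 \<and> vL (sum f {..<p}) = vL (f r)"
  proof (rule v_sum_dominant)
    fix i assume i: "i \<in> {..<p} - {r}"
    show "val_ge vL (f i) (vL (f r) + 1)"
    proof (cases "i = 0 \<or> coord y i = 0")
      case nz: False
      have "val_ge vL (coord y i * piL ^ i) (vL y + 1)" using lead i by auto
      then have "vL (coord y i) + int i \<ge> vL y + 1"
        using v_coeff_piL_power[of "coord y i" i] nz by (simp add: val_ge_def)
      then show ?thesis using v_\<Delta>_power_piL[of "coord y i" i] nz i fr unfolding f_def by (simp add: val_ge_def)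
    qed (auto simp: f_def)
  qed (use lead fr in auto)
  then show ?thesis using fr unfolding \<Delta>_coord f_def by simp
qed

lemma v_\<Delta>_funpow:
  assumes "y \<noteq> 0" "\<forall>j<k. \<not> int p dvd vL y + int j * b1"
  shows "(\<Delta> ^^ k) y \<noteq> 0 \<and> vL ((\<Delta> ^^ k) y) = vL y + int k * b1"
  using assms(2)
proof (induction k)
  case (Suc k)
  then have IH: "(\<Delta> ^^ k) y \<noteq> 0" "vL ((\<Delta> ^^ k) y) = vL y + int k * b1" by auto
  then have "\<not> int p dvd vL ((\<Delta> ^^ k) y)" using Suc.prems by auto
  then show ?case using v_\<Delta>[OF IH(1)] IH(2) by (simp add: algebra_simps)
qed (use assms(1) in simp)

lemma sigma0_funpow_binomial: "(sigma0 ^^ n) y = (\<Sum>k\<le>n. of_nat (n choose k) * (\<Delta> ^^ k) y)"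
proof (induction n)
  case (Suc n)
  define x where "x k = (\<Delta> ^^ k) y" for k
  have \<sigma>x: "sigma0 (x k) = x k + x (Suc k)" for k unfolding x_def \<Delta>_def by simp
  have "(sigma0 ^^ Suc n) y = (\<Sum>k\<le>n. of_nat (n choose k) * (x k + x (Suc k)))"
    unfolding funpow.simps comp_apply Suc x_def[symmetric] using \<sigma>x
    by (simp add: gal_sum[OF sigma0(1)] gal_mult[OF sigma0(1)] gal_of_nat[OF sigma0(1)])
  also have "\<dots> = (\<Sum>k\<le>n. of_nat (n choose k) * x k) + (\<Sum>k\<le>n. of_nat (n choose k) * x (Suc k))"
    by (simp add: distrib_left sum.distrib)
  also have "(\<Sum>k\<le>n. of_nat (n choose k) * x k) = x 0 + (\<Sum>k<n. of_nat (n choose Suc k) * x (Suc k))"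
    by (simp add: sum.atMost_shift)
  also have "(\<Sum>k<n. of_nat (n choose Suc k) * x (Suc k)) = (\<Sum>k\<le>n. of_nat (n choose Suc k) * x (Suc k))"
    by (simp add: lessThan_Suc_atMost[symmetric] binomial_eq_0)
  also have "x 0 + (\<Sum>k\<le>n. of_nat (n choose Suc k) * x (Suc k)) + (\<Sum>k\<le>n. of_nat (n choose k) * x (Suc k))
      = x 0 + (\<Sum>k\<le>n. of_nat (Suc n choose Suc k) * x (Suc k))"
    by (simp add: sum.distrib[symmetric] algebra_simps)
  also have "\<dots> = (\<Sum>k\<le>Suc n. of_nat (Suc n choose k) * x k)"
    by (simp only: sum.atMost_Suc_shift binomial_n_0 of_nat_1 mult_1)
  finally show ?case unfolding x_def .
qed simp

text \<open>Expand \<open>(1 + \<Delta>)\<^sup>p = sigma0\<^sup>p = 1\<close>.\<close>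
lemma \<Delta>_funpow_p: "(\<Delta> ^^ p) y = - (\<Sum>k\<in>{1..<p}. of_nat (p choose k) * (\<Delta> ^^ k) y)"
proof -
  define g where "g k = of_nat (p choose k) * (\<Delta> ^^ k) y" for k
  have "y = (\<Sum>k\<le>p. g k)"
    using sigma0_funpow_binomial[of p y] gal_funpow_card[OF sigma0(1)] card_gal unfolding g_def by simp
  also have "{..p} = insert 0 (insert p {1..<p})" using p_gt_1 by auto
  finally have "y = g 0 + (g p + sum g {1..<p})" using p_gt_1 by simp
  then show ?thesis unfolding g_def by (simp add: algebra_simps eq_neg_iff_add_eq_0)
qed

lemma \<Delta>_funpow_p_char_p: "(of_nat p :: 'a) = 0 \<Longrightarrow> (\<Delta> ^^ p) y = 0"
proof -
  assume char: "(of_nat p :: 'a) = 0"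
  have "(of_nat (p choose k) :: 'a) = 0" if "k \<in> {1..<p}" for k
    using p_dvd_choose[of k] that char by (auto elim!: dvdE)
  then show ?thesis using \<Delta>_funpow_p[of y] by simp
qed

lemma v_\<Delta>_funpow_p:
  assumes char: "(of_nat p :: 'a) \<noteq> 0" and "\<Delta> y \<noteq> 0"
  shows "(\<Delta> ^^ p) y \<noteq> 0 \<and> vL ((\<Delta> ^^ p) y) = vL (of_nat p :: 'a) + vL (\<Delta> y)"
proof -
  define t where "t k = of_nat (p choose k) * (\<Delta> ^^ k) y" for k
  have t1: "t 1 \<noteq> 0 \<and> vL (t 1) = vL (of_nat p :: 'a) + vL (\<Delta> y)"
    unfolding t_def using assms v_mult by simp
  have "sum t {1..<p} \<noteq> 0 \<and> vL (sum t {1..<p}) = vL (t 1)"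
  proof (rule v_sum_dominant)
    fix k assume k: "k \<in> {1..<p} - {1}"
    then obtain m where m: "p choose k = p * m" using p_dvd_choose[of k] by (auto elim!: dvdE)
    obtain j where j: "k = Suc (Suc j)" using k by (intro that[of "k - 2"]) auto
    have e: "(\<Delta> ^^ k) y = (\<Delta> ^^ Suc j) (\<Delta> y)" unfolding j by (simp add: funpow_Suc_right del: funpow.simps)
    have "val_ge vL ((\<Delta> ^^ Suc j) (\<Delta> y)) (vL (\<Delta> y) + int (Suc j) * b1)"
      by (rule val_ge_\<Delta>_funpow[OF val_ge_self])
    then have "val_ge vL ((\<Delta> ^^ k) y) (vL (\<Delta> y) + int (Suc j) * b1)" by (simp only: e)
    then have "val_ge vL (of_nat p * (of_nat m * (\<Delta> ^^ k) y)) (vL (of_nat p :: 'a) + (0 + (vL (\<Delta> y) + int (Suc j) * b1)))"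
      using char by (intro val_ge_mult val_ge_self val_ge_of_nat)
    moreover have "int (Suc j) * b1 \<ge> 1 * 1" using b1_pos by (intro mult_mono) auto
    then have "vL (of_nat p :: 'a) + (0 + (vL (\<Delta> y) + int (Suc j) * b1)) \<ge> vL (t 1) + 1"
      using t1 by simp
    ultimately have "val_ge vL (of_nat p * (of_nat m * (\<Delta> ^^ k) y)) (vL (t 1) + 1)"
      by (rule val_ge_mono)
    moreover have "t k = of_nat p * (of_nat m * (\<Delta> ^^ k) y)" unfolding t_def m by (simp add: mult.assoc)
    ultimately show "val_ge vL (t k) (vL (t 1) + 1)" by simp
  qed (use p_gt_1 t1 in auto)
  then show ?thesis using t1 \<Delta>_funpow_p[of y] unfolding t_def by simp
qed

end

section \<open>The element \<open>X\<close>\<close>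

locale scaffold_setting = totally_ramified_p +
  assumes break_condition: "of_nat p = (0::'a) \<or> (int p - 1) * b1 \<noteq> vL (of_nat p)"
begin

text \<open>If \<open>p\<close> divided \<open>b1\<close>, then \<open>\<Delta>\<^sup>k\<close> would shift \<open>vL piL\<close> by exactly \<open>k b1\<close> for all \<open>k\<close>,
  contradicting \<open>\<Delta>\<^sup>p piL = 0\<close> in characteristic \<open>p\<close>, and forcing \<open>(p-1) b1 = vL p\<close>
  in characteristic \<open>0\<close>.\<close>
lemma b1_not_dvd: "\<not> int p dvd b1"
proof
  assume "int p dvd b1"
  then have "int p dvd vL piL + int j * b1 \<longleftrightarrow> int p dvd 1" for j
    using piL(2) by (simp add: dvd_add_left_iff)
  then have "\<not> int p dvd vL piL + int j * b1" for j using p_gt_1 by simp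
  then have chain: "(\<Delta> ^^ k) piL \<noteq> 0 \<and> vL ((\<Delta> ^^ k) piL) = 1 + int k * b1" for k
    using v_\<Delta>_funpow[OF piL(1)] piL by simp
  show False
  proof (cases "(of_nat p :: 'a) = 0")
    case True
    then show False using \<Delta>_funpow_p_char_p chain[of p] by simp
  next
    case False
    then have "vL ((\<Delta> ^^ p) piL) = vL (of_nat p :: 'a) + 1 + b1"
      using v_\<Delta>_funpow_p chain[of 1] by simp
    then have "(int p - 1) * b1 = vL (of_nat p :: 'a)" using chain[of p] by (simp add: algebra_simps)
    then show False using break_condition False by simp
  qed
qed

text \<open>With \<open>z = piL\<^sup>b\<^sup>1\<close>, the quotient \<open>X = \<Delta>\<^sup>p\<^sup>-\<^sup>2 z / \<Delta>\<^sup>p\<^sup>-\<^sup>1 z\<close> satisfies \<open>\<Delta>(\<Delta>\<^sup>p\<^sup>-\<^sup>2 z) = \<Delta>\<^sup>p\<^sup>-\<^sup>1 z\<close>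
  while \<open>\<Delta>\<^sup>p\<^sup>-\<^sup>1 z\<close> is fixed by \<open>sigma0\<close> up to \<open>\<Delta>\<^sup>p z\<close>, so \<open>sigma0 X \<approx> X + 1\<close>.\<close>
definition X_num :: 'a where
  "X_num = (\<Delta> ^^ (p - 2)) (piL ^ nat b1)"

definition X_den :: 'a where
  "X_den = (\<Delta> ^^ (p - 1)) (piL ^ nat b1)"

definition X :: 'a where
  "X = X_num / X_den"

lemma v_\<Delta>_funpow_piL_power_b1:
  assumes "k \<le> p - 1"
  shows "(\<Delta> ^^ k) (piL ^ nat b1) \<noteq> 0 \<and> vL ((\<Delta> ^^ k) (piL ^ nat b1)) = (int k + 1) * b1"
proof -
  have z: "piL ^ nat b1 \<noteq> 0" "vL (piL ^ nat b1) = b1" using piL b1_pos by (simp_all add: v_power)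
  have "\<not> int p dvd vL (piL ^ nat b1) + int j * b1" if "j < k" for j
  proof
    assume "int p dvd vL (piL ^ nat b1) + int j * b1"
    then have "int p dvd int (Suc j) * b1" using z by (simp add: algebra_simps)
    then have "int p dvd int (Suc j)" using b1_not_dvd prime prime_dvd_mult_iff[of "int p"] by auto
    then have "p dvd Suc j" by (simp only: int_dvd_int_iff)
    then show False using that assms p_gt_1 by (auto dest: dvd_imp_le)
  qed
  then show ?thesis using v_\<Delta>_funpow[OF z(1)] z by (simp add: algebra_simps)
qed

lemma X_num: "X_num \<noteq> 0" "vL X_num = (int p - 1) * b1"
  using v_\<Delta>_funpow_piL_power_b1[of "p - 2"] p_gt_1 unfolding X_num_def by (simp_all add: of_nat_diff)

lemma X_den: "X_den \<noteq> 0" "vL X_den = int p * b1"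
  using v_\<Delta>_funpow_piL_power_b1[of "p - 1"] p_gt_1 unfolding X_den_def by (simp_all add: of_nat_diff)

lemma \<Delta>_X_num: "\<Delta> X_num = X_den"
proof -
  have "p - 1 = Suc (p - 2)" using p_gt_1 by simp
  then show ?thesis unfolding X_num_def X_den_def by simp
qed

lemma \<Delta>_X_den: "\<Delta> X_den = (\<Delta> ^^ p) (piL ^ nat b1)"
proof -
  have "p = Suc (p - 1)" using p_gt_1 by simp
  then show ?thesis unfolding X_den_def by (metis funpow.simps(2) o_apply)
qed

lemma v_X: "X \<noteq> 0" "vL X = - b1"
  unfolding X_def using X_num X_den by (simp_all add: v_divide algebra_simps)

lemma sigma0_X: "sigma0 X = (X_num + X_den) / (X_den + \<Delta> X_den)"
  unfolding X_def gal_divide[OF sigma0(1)] using \<Delta>_X_num unfolding \<Delta>_def by (simp add: algebra_simps)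

lemma sigma0_X_char_p: "(of_nat p :: 'a) = 0 \<Longrightarrow> sigma0 X = X + 1"
  using sigma0_X \<Delta>_X_den \<Delta>_funpow_p_char_p X_den unfolding X_def by (simp add: field_simps)

definition tolerance :: int where
  "tolerance = vL (of_nat p) - (int p - 1) * b1"

lemma v_\<Delta>_X_den_char_0:
  assumes "(of_nat p :: 'a) \<noteq> 0"
  shows "\<Delta> X_den \<noteq> 0" "vL (\<Delta> X_den) = vL (of_nat p :: 'a) + 2 * b1"
  using v_\<Delta>_funpow_p[OF assms] v_\<Delta>_funpow_piL_power_b1[of 1] p_gt_1 \<Delta>_X_den by auto

lemma tolerance_pos: "(of_nat p :: 'a) \<noteq> 0 \<Longrightarrow> tolerance \<ge> 1"
proof -
  assume char: "(of_nat p :: 'a) \<noteq> 0"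
  have "val_ge vL (\<Delta> X_den) (vL X_den + b1)" by (rule val_ge_\<Delta>[OF val_ge_self])
  then have "vL (of_nat p :: 'a) + 2 * b1 \<ge> int p * b1 + b1"
    using v_\<Delta>_X_den_char_0[OF char] X_den by (simp add: val_ge_def)
  then have "tolerance \<ge> 0" unfolding tolerance_def by (simp add: algebra_simps)
  moreover have "tolerance \<noteq> 0" using break_condition char unfolding tolerance_def by simp
  ultimately show ?thesis by simp
qed

lemma val_ge_sigma0_X_char_0:
  assumes char: "(of_nat p :: 'a) \<noteq> 0"
  shows "val_ge vL (sigma0 X - X - 1) tolerance"
proof -
  have den: "X_den + \<Delta> X_den \<noteq> 0" "vL (X_den + \<Delta> X_den) = vL X_den"
    using gal_v[OF sigma0(1) X_den(1)] unfolding \<Delta>_def by auto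
  have "val_ge vL X_den (vL X_num + 1)" using X_num X_den b1_pos by (simp add: val_ge_def algebra_simps)
  then have num: "X_num + X_den \<noteq> 0" "vL (X_num + X_den) = vL X_num"
    using v_add_dominant[OF X_num(1)] by auto
  have "sigma0 X - X - 1 = - ((X_num + X_den) * \<Delta> X_den / (X_den * (X_den + \<Delta> X_den)))"
    using quotient_shift_identity[OF X_den(1) den(1), of X_num] sigma0_X unfolding X_def by simp
  then have "vL (sigma0 X - X - 1) = vL X_num + vL (\<Delta> X_den) - (vL X_den + vL X_den)"
    using num den X_den(1) v_\<Delta>_X_den_char_0[OF char] by (simp add: v_divide v_mult)
  also have "\<dots> = tolerance"
    using X_num X_den v_\<Delta>_X_den_char_0[OF char] unfolding tolerance_def by (simp add: algebra_simps)
  finally show ?thesis by (simp add: val_ge_def)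
qed

end

section \<open>Construction of the scaffold\<close>

context scaffold_setting
begin

definition a_of :: "int \<Rightarrow> nat" where
  "a_of t = frak_a p 1 (lower_break K vL p 1) t"

lemma lower_break_not_dvd: "\<not> int p dvd lower_break K vL p 1 1"
  using b1_not_dvd lower_break_eq_b1 by simp

lemma a_of_iff: "a_of t = s \<longleftrightarrow> s < p \<and> (int s * b1) mod int p = (- t) mod int p"
  unfolding a_of_def frak_a_degree_1_iff[where B = "lower_break K vL p 1", OF prime lower_break_not_dvd] lower_break_eq_b1 ..

lemma a_of_less: "a_of t < p"
  using a_of_iff[of t "a_of t"] by simp

lemma p_dvd_a_of: "int p dvd t + int (a_of t) * b1"
proof -
  have "int p dvd int (a_of t) * b1 - (- t)" using a_of_iff[of t "a_of t"] by (simp add: mod_eq_dvd_iff)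
  then show ?thesis by (simp add: algebra_simps)
qed

lemma a_of_shift: "a_of t \<ge> 1 \<Longrightarrow> a_of (t + b1) = a_of t - 1"
  unfolding a_of_iff mod_eq_dvd_iff using a_of_less[of t] p_dvd_a_of[of t]
  by (simp add: algebra_simps of_nat_diff)

lemma a_of_mod:
  assumes "t1 mod int p = t2 mod int p"
  shows "a_of t1 = a_of t2"
proof -
  have "int p dvd t1 - t2" using assms by (simp add: mod_eq_dvd_iff)
  from dvd_add[OF p_dvd_a_of[of t2] this]
  have "int p dvd (t2 + int (a_of t2) * b1) + (t1 - t2)" .
  then have "int p dvd int (a_of t2) * b1 - - t1" by (simp add: algebra_simps)
  then show ?thesis unfolding a_of_iff using a_of_less by (simp add: mod_eq_dvd_iff)
qed

definition scaffold_coeff :: "int \<Rightarrow> 'a" where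
  "scaffold_coeff t = piK powi ((t + int (a_of t) * b1) div int p)"

lemma scaffold_coeff: "scaffold_coeff t \<in> K" "scaffold_coeff t \<noteq> 0" "vL (scaffold_coeff t) = t + int (a_of t) * b1"
  unfolding scaffold_coeff_def using subfield_power_int[OF subfield piK(1)] piK v_power_int p_dvd_a_of[of t]
  by auto

lemma scaffold_coeff_shift: "a_of t \<ge> 1 \<Longrightarrow> scaffold_coeff (t + b1) = scaffold_coeff t"
  unfolding scaffold_coeff_def using a_of_shift by (simp add: algebra_simps of_nat_diff)

definition X_falling :: "nat \<Rightarrow> 'a" where
  "X_falling a = (\<Prod>j<a. X - of_nat j)"

lemma X_falling: "X_falling a \<noteq> 0" "vL (X_falling a) = - (int a * b1)"
proof -
  have "val_ge vL (- of_nat j :: 'a) (vL X + 1)" for j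
    using val_ge_mono[OF val_ge_of_nat[of j]] v_X b1_pos by simp
  then have "X - of_nat j \<noteq> 0 \<and> vL (X - of_nat j) = - b1" for j
    using v_add_dominant[OF v_X(1)] v_X(2) by (metis diff_conv_add_uminus)
  then show "X_falling a \<noteq> 0" "vL (X_falling a) = - (int a * b1)"
    using v_prod[of "{..<a}" "\<lambda>j. X - of_nat j"] unfolding X_falling_def by auto
qed

text \<open>This is \<open>\<lambda>\<^sub>t\<close>: the factor from \<open>K\<close> adjusts the valuation \<open>-a b1\<close> of the falling
  product to \<open>t\<close>, which is possible because \<open>t + a b1 \<equiv> 0 (mod p)\<close>.\<close>
definition lam :: "int \<Rightarrow> 'a" where
  "lam t = scaffold_coeff t * X_falling (a_of t)"

lemma lam: "lam t \<noteq> 0" "vL (lam t) = t"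
  unfolding lam_def using scaffold_coeff X_falling by (simp_all add: v_mult)

lemma lam_ratio_in_K: "t1 mod int p = t2 mod int p \<Longrightarrow> lam t1 * inverse (lam t2) \<in> K"
proof -
  assume "t1 mod int p = t2 mod int p"
  then have "a_of t1 = a_of t2" by (rule a_of_mod)
  then have "lam t1 * inverse (lam t2) = scaffold_coeff t1 * inverse (scaffold_coeff t2)"
    unfolding lam_def using X_falling scaffold_coeff by (simp add: field_simps)
  then show ?thesis using scaffold_coeff subfield_mult[OF subfield] subfield_inverse[OF subfield] by simp
qed

lemma \<Delta>_X_falling:
  assumes "a \<ge> 1"
  shows "\<Delta> (X_falling a) - of_nat a * X_falling (a - 1)
    = (\<Prod>j<a. (X + 1 - of_nat j) + (sigma0 X - X - 1)) - (\<Prod>j<a. X + 1 - of_nat j)"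
proof -
  have "sigma0 (X_falling a) = (\<Prod>j<a. (X + 1 - of_nat j) + (sigma0 X - X - 1))"
    unfolding X_falling_def by (simp add: gal_prod[OF sigma0(1)] gal_diff[OF sigma0(1)] gal_of_nat[OF sigma0(1)])
  moreover obtain a' where "a = Suc a'" using assms by (cases a) auto
  then have "(\<Prod>j<a. X + 1 - of_nat j) - X_falling a = of_nat a * X_falling (a - 1)"
    unfolding X_falling_def using falling_prod_diff[of X a'] by simp
  ultimately show ?thesis unfolding \<Delta>_def by (simp add: algebra_simps)
qed

lemma \<Delta>_X_falling_char_p: "(of_nat p :: 'a) = 0 \<Longrightarrow> a \<ge> 1 \<Longrightarrow> \<Delta> (X_falling a) = of_nat a * X_falling (a - 1)"
  using \<Delta>_X_falling sigma0_X_char_p by simp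

lemma val_ge_\<Delta>_X_falling_char_0:
  assumes char: "(of_nat p :: 'a) \<noteq> 0" and "a \<ge> 1"
  shows "val_ge vL (\<Delta> (X_falling a) - of_nat a * X_falling (a - 1)) (tolerance - (int a - 1) * b1)"
proof -
  have "val_ge vL (X + 1 - of_nat j) (- b1)" for j
  proof -
    have "val_ge vL (1 - of_nat j :: 'a) (- b1)"
      using val_ge_mono[OF val_ge_diff[OF val_ge_one val_ge_of_nat]] b1_pos by simp
    then show ?thesis using val_ge_add[of X "- b1"] v_X by (simp add: val_ge_def add_diff_eq[symmetric])
  qed
  then have "val_ge vL ((\<Prod>j\<in>{..<a}. (X + 1 - of_nat j) + (sigma0 X - X - 1)) - (\<Prod>j\<in>{..<a}. X + 1 - of_nat j))
      (tolerance + (int (card {..<a}) - 1) * (- b1))"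
    using assms val_ge_sigma0_X_char_0[OF char] tolerance_pos[OF char] b1_pos
    by (intro val_ge_prod_perturb) (auto simp: lessThan_empty_iff)
  then show ?thesis unfolding \<Delta>_X_falling[OF assms(2)] by (simp add: algebra_simps)
qed

text \<open>\<open>\<Psi> = sigma0 - 1 \<in> K[G]\<close>, the same for every index since \<open>n = 1\<close>.\<close>
definition Psi :: "nat \<Rightarrow> ('a \<Rightarrow> 'a) \<Rightarrow> 'a" where
  "Psi i \<tau> = (if \<tau> = sigma0 then 1 else if \<tau> = id then -1 else 0)"

lemma grp_act_Psi: "grp_act (gal K) (Psi i) y = \<Delta> y"
proof -
  have "grp_act (gal K) (Psi i) y = (\<Sum>\<tau>\<in>{sigma0, id}. Psi i \<tau> * \<tau> y)"
    unfolding grp_act_def using finite_gal sigma0(1) gal_id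
    by (intro sum.mono_neutral_right) (auto simp: Psi_def)
  then show ?thesis using sigma0(2) unfolding \<Delta>_def by (simp add: Psi_def)
qed

definition scaffold_tolerance :: enat where
  "scaffold_tolerance = (if (of_nat p :: 'a) = 0 then \<infinity> else enat (nat tolerance))"

lemma scaffold_tolerance_ge_1: "scaffold_tolerance \<ge> 1"
  using tolerance_pos unfolding scaffold_tolerance_def by (auto simp: one_enat_def)

lemma \<Delta>_lam_a_of_0: "a_of t = 0 \<Longrightarrow> \<Delta> (lam t) = 0"
  unfolding lam_def X_falling_def using \<Delta>_smult[OF scaffold_coeff(1), of t 1] \<Delta>_one by simp

lemma cong_\<Delta>_lam:
  assumes "a_of t \<ge> 1"
  shows "cong_tol vL scaffold_tolerance (t + b1) (\<Delta> (lam t)) (of_nat (a_of t) * lam (t + b1))"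
proof -
  define a where "a = a_of t"
  have shift: "lam (t + b1) = scaffold_coeff t * X_falling (a - 1)"
    unfolding lam_def a_def using scaffold_coeff_shift a_of_shift assms by simp
  have "\<Delta> (lam t) = scaffold_coeff t * \<Delta> (X_falling a)"
    unfolding lam_def a_def by (rule \<Delta>_smult[OF scaffold_coeff(1)])
  then have diff: "\<Delta> (lam t) - of_nat a * lam (t + b1) = scaffold_coeff t * (\<Delta> (X_falling a) - of_nat a * X_falling (a - 1))"
    unfolding shift by (simp add: algebra_simps)
  show ?thesis
  proof (cases "(of_nat p :: 'a) = 0")
    case True
    then show ?thesis
      using diff \<Delta>_X_falling_char_p assms unfolding a_def cong_tol_def by simp
  next
    case char: False
    have "val_ge vL (\<Delta> (lam t) - of_nat a * lam (t + b1)) (vL (scaffold_coeff t) + (tolerance - (int a - 1) * b1))"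
      unfolding diff using val_ge_\<Delta>_X_falling_char_0[OF char] assms unfolding a_def
      by (intro val_ge_mult val_ge_self) simp
    moreover have "vL (scaffold_coeff t) + (tolerance - (int a - 1) * b1) = t + b1 + int (nat tolerance)"
      using scaffold_coeff(3) tolerance_pos[OF char] unfolding a_def by (simp add: algebra_simps)
    ultimately show ?thesis
      using char unfolding cong_tol_def scaffold_tolerance_def a_def by (auto simp: val_ge_def)
  qed
qed

theorem galois_scaffold_degree_p: "galois_scaffold K vL p 1 scaffold_tolerance"
proof -
  have unit: "\<exists>u. u \<in> K \<and> u \<noteq> 0 \<and> vL u = 0 \<and>
      cong_tol vL scaffold_tolerance (t + b1) (\<Delta> (lam t)) (u * lam (t + b1))" if "a_of t \<ge> 1" for t
  proof -
    have "\<not> p dvd a_of t" using that a_of_less[of t] by (auto dest: dvd_imp_le)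
    then show ?thesis
      using cong_\<Delta>_lam[OF that] v_of_nat_coprime subfield_of_nat[OF subfield] by blast
  qed
  have "scaffold K vL p 1 (lower_break K vL p 1) scaffold_tolerance lam Psi"
  proof (rule scaffold_degree_p_intro[where b = "lower_break K vL p 1",
        OF subfield prime lower_break_not_dvd scaffold_tolerance_ge_1 _ lam_ratio_in_K _ _ _ _ normalized])
    show "lam t \<noteq> 0 \<and> vL (lam t) = t" for t using lam by simp
    show "Psi 1 \<sigma> \<in> K" for \<sigma>
      using subfield_zero[OF subfield] subfield_one[OF subfield] subfield_uminus[OF subfield subfield_one[OF subfield]]
      unfolding Psi_def by simp
    show "grp_act (gal K) (Psi 1) 1 = 0" using grp_act_Psi \<Delta>_one by simp
    show "\<exists>u. u \<in> K \<and> u \<noteq> 0 \<and> vL u = 0 \<and> cong_tol vL scaffold_tolerance (t + lower_break K vL p 1 1)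
        (grp_act (gal K) (Psi 1) (lam t)) (u * lam (t + lower_break K vL p 1 1))"
      if "frak_a p 1 (lower_break K vL p 1) t \<ge> 1" for t
      using unit[of t] that unfolding a_of_def[symmetric] lower_break_eq_b1 grp_act_Psi by simp
    show "cong_tol vL scaffold_tolerance (t + lower_break K vL p 1 1) (grp_act (gal K) (Psi 1) (lam t)) 0"
      if "frak_a p 1 (lower_break K vL p 1) t = 0" for t
      using \<Delta>_lam_a_of_0[of t] that unfolding a_of_def[symmetric] grp_act_Psi cong_tol_def by simp
  qed
  then show ?thesis unfolding galois_scaffold_def by blast
qed

end

context totally_ramified_p
begin

lemma galois_scaffold_char_p:
  assumes "(of_nat p :: 'a) = 0"
  shows "galois_scaffold K vL p 1 \<infinity>"
proof -
  interpret scaffold_setting vL K vK p by unfold_locales (use assms in simp)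
  show ?thesis using galois_scaffold_degree_p assms unfolding scaffold_tolerance_def by simp
qed

lemma galois_scaffold_char_0:
  assumes char: "(of_nat p :: 'a) \<noteq> 0" and "(int p - 1) * b1 \<noteq> vL (of_nat p)"
  shows "vL (of_nat p) - (int p - 1) * b1 \<ge> 1
    \<and> galois_scaffold K vL p 1 (enat (nat (vL (of_nat p) - (int p - 1) * b1)))"
proof -
  interpret scaffold_setting vL K vK p by unfold_locales (use assms(2) in simp)
  show ?thesis
    using galois_scaffold_degree_p tolerance_pos[OF char] char
    unfolding scaffold_tolerance_def tolerance_def by simp
qed

end

theorem lemma4p1:
  fixes K :: "'a::field set" and vK vL :: "'a \<Rightarrow> int" and p :: nat
  assumes "subfield K"
    and "normalized_dval_on K vK"
    and "complete_wrt K vK"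
    and "prime p"
    and "residue_char K vK p"
    and "residue_perfect K vK p"
    and "normalized_dval vL"
    and "galois_of_degree K p"
    and "totally_ramified K vK vL p"
  shows "(of_nat p = (0::'a) \<longrightarrow> galois_scaffold K vL p 1 \<infinity>)
       \<and> ((\<forall>m::nat. m > 0 \<longrightarrow> of_nat m \<noteq> (0::'a))
           \<and> (int p - 1) * lower_break K vL p 1 1 \<noteq> int p * vK (of_nat p)
          \<longrightarrow> int p * vK (of_nat p) - (int p - 1) * lower_break K vL p 1 1 \<ge> 1
            \<and> galois_scaffold K vL p 1
                 (enat (nat (int p * vK (of_nat p) - (int p - 1) * lower_break K vL p 1 1))))"
proof -
  interpret totally_ramified_p vL K vK p
    using assms by unfold_locales auto
  have "vL (of_nat p) = int p * vK (of_nat p)" if "of_nat p \<noteq> (0::'a)"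
    using vL_on_K subfield_of_nat[OF subfield] that by blast
  then show ?thesis
    using galois_scaffold_char_p galois_scaffold_char_0 lower_break_eq_b1 p_gt_1 by auto
qed

end
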